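(* Let $\Gamma$ be a uniform layered graph with unique minimal vertex, and $n\ge2$. A basis $L$ of $B_n$ is upper vertex-like if and only if there exists a bijection $\psi:V_n\to L$ with $\kappa_v=\kappa_{\psi(v)}$ for all $v\in V_n$.
   Context: A layered graph is a finite directed graph $\Gamma=(V,E)$ with $V=\bigsqcup_{i=0}^{N}V_i$ such that every edge from $V_i$ goes to $V_{i-1}$; $|v|=i$ for $v\in V_i$, $V_+=\bigsqcup_{i\ge1}V_i$, $V_{\ge k}=\bigsqcup_{i\ge k}V_i$, $S(v)=\{w:(v,w)\in E\}$, nonempty for $v\in V_+$, $|V_0|=1$. $\Gamma$ is uniform if for every $v\in V_{\ge2}$ the elements of $S(v)$ form a single class under the transitive closure of $w\approx u$ iff $S(w)\cap S(u)\ne\emptyset$. Over a field $\mathbb F$, $B(\Gamma)=T(V_+)/R_B$ with $R_B$ the two-sided ideal generated by $\{vw: v,w\in V_+,(v,w)\notin E\}\cup\{v\sum_{w\in S(v)}w: v\in V_{\ge2}\}$, doubly graded with $v_1\cdots v_m$ in bidegree $(m,\sum|v_i|)$; $B_n=\operatorname{span}V_n$ is the bidegree $(1,n)$ part. For $a\in B_n$, $\kappa_a=\ker(B_{n-1}\to B(\Gamma),b\mapsto ab)$. The restriction $\Gamma|_n$ is the layered graph with vertex set $\bigcup_{i\le n}V_i$ and the edges between them; $B(\Gamma|_n)$ is the subalgebra of $B(\Gamma)$ generated by $\bigcup_{i=1}^nV_i$. A basis $L$ of $B_n$ is upper vertex-like if there is a doubly graded algebra automorphism of $B(\Gamma|_n)$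 fixing every vertex in $\bigcup_{i=1}^{n-1}V_i$ and mapping the set $V_n$ onto $L$. *)

theory Defs
  imports Main
begin

definition lay :: "'v set \<Rightarrow> ('v \<Rightarrow> nat) \<Rightarrow> nat \<Rightarrow> 'v set" where
  "lay V lev i = {v \<in> V. lev v = i}"

definition succs :: "('v \<times> 'v) set \<Rightarrow> 'v \<Rightarrow> 'v set" where
  "succs E v = {w. (v, w) \<in> E}"

definition Vplus :: "'v set \<Rightarrow> ('v \<Rightarrow> nat) \<Rightarrow> 'v set" where
  "Vplus V lev = {v \<in> V. 1 \<le> lev v}"

definition layered_graph :: "'v set \<Rightarrow> ('v \<Rightarrow> nat) \<Rightarrow> ('v \<times> 'v) set \<Rightarrow> bool" where
  "layered_graph V lev E \<longleftrightarrow>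
     finite V \<and> E \<subseteq> V \<times> V \<and>
     (\<forall>(v, w) \<in> E. 1 \<le> lev v \<and> lev w = lev v - 1) \<and>
     (\<forall>v \<in> V. 1 \<le> lev v \<longrightarrow> succs E v \<noteq> {}) \<and>
     card (lay V lev 0) = 1"

definition meet_rel :: "('v \<times> 'v) set \<Rightarrow> 'v \<Rightarrow> ('v \<times> 'v) set" where
  "meet_rel E v = {(w, u). w \<in> succs E v \<and> u \<in> succs E v \<and> succs E w \<inter> succs E u \<noteq> {}}"

definition uniform :: "'v set \<Rightarrow> ('v \<Rightarrow> nat) \<Rightarrow> ('v \<times> 'v) set \<Rightarrow> bool" where
  "uniform V lev E \<longleftrightarrow>
     (\<forall>v \<in> V. 2 \<le> lev v \<longrightarrow>
        (\<forall>w \<in> succs E v. \<forall>u \<in> succs E v. (w, u) \<in> (meet_rel E v)\<^sup>*))"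

definition restrV :: "'v set \<Rightarrow> ('v \<Rightarrow> nat) \<Rightarrow> nat \<Rightarrow> 'v set" where
  "restrV V lev n = {v \<in> V. lev v \<le> n}"

definition restrE :: "'v set \<Rightarrow> ('v \<Rightarrow> nat) \<Rightarrow> ('v \<times> 'v) set \<Rightarrow> nat \<Rightarrow> ('v \<times> 'v) set" where
  "restrE V lev E n = E \<inter> (restrV V lev n \<times> restrV V lev n)"

section \<open>Free (tensor) algebra over a field, elements as finitely supported functions on words\<close>

definition tensor_alg :: "'v set \<Rightarrow> ('v list \<Rightarrow> 'k::field) set" where
  "tensor_alg A = {x. finite {w. x w \<noteq> 0} \<and> (\<forall>w. x w \<noteq> 0 \<longrightarrow> set w \<subseteq> A)}"

definition tzero :: "'v list \<Rightarrow> 'k::field" where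
  "tzero = (\<lambda>w. 0)"

definition tadd :: "('v list \<Rightarrow> 'k::field) \<Rightarrow> ('v list \<Rightarrow> 'k) \<Rightarrow> 'v list \<Rightarrow> 'k" where
  "tadd x y = (\<lambda>w. x w + y w)"

definition tsub :: "('v list \<Rightarrow> 'k::field) \<Rightarrow> ('v list \<Rightarrow> 'k) \<Rightarrow> 'v list \<Rightarrow> 'k" where
  "tsub x y = (\<lambda>w. x w - y w)"

definition tscale :: "'k::field \<Rightarrow> ('v list \<Rightarrow> 'k) \<Rightarrow> 'v list \<Rightarrow> 'k" where
  "tscale c x = (\<lambda>w. c * x w)"

definition tmul :: "('v list \<Rightarrow> 'k::field) \<Rightarrow> ('v list \<Rightarrow> 'k) \<Rightarrow> 'v list \<Rightarrow> 'k" where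
  "tmul x y = (\<lambda>w. \<Sum>i\<le>length w. x (take i w) * y (drop i w))"

definition tmon :: "'v list \<Rightarrow> 'v list \<Rightarrow> 'k::field" where
  "tmon w = (\<lambda>u. if u = w then 1 else 0)"

definition is_two_sided_ideal :: "'v set \<Rightarrow> ('v list \<Rightarrow> 'k::field) set \<Rightarrow> bool" where
  "is_two_sided_ideal A I \<longleftrightarrow>
     I \<subseteq> tensor_alg A \<and> tzero \<in> I \<and>
     (\<forall>x \<in> I. \<forall>y \<in> I. tadd x y \<in> I) \<and>
     (\<forall>c. \<forall>x \<in> I. tscale c x \<in> I) \<and>
     (\<forall>a \<in> tensor_alg A. \<forall>x \<in> I. tmul a x \<in> I \<and> tmul x a \<in> I)"

definition ideal_gen :: "'v set \<Rightarrow> ('v list \<Rightarrow> 'k::field) set \<Rightarrow> ('v list \<Rightarrow> 'k) set" where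
  "ideal_gen A G = \<Inter> {I. is_two_sided_ideal A I \<and> G \<subseteq> I}"

definition hom_bideg :: "('v \<Rightarrow> nat) \<Rightarrow> nat \<Rightarrow> nat \<Rightarrow> ('v list \<Rightarrow> 'k::field) \<Rightarrow> bool" where
  "hom_bideg lev m d x \<longleftrightarrow> (\<forall>w. x w \<noteq> 0 \<longrightarrow> length w = m \<and> sum_list (map lev w) = d)"

section \<open>The algebra B(Gamma) = T(V_+)/R_B\<close>

text \<open>Generators of R_B: vw for non-edges, and v * (sum of w in S(v)) for |v| >= 2.\<close>
definition relB :: "'v set \<Rightarrow> ('v \<Rightarrow> nat) \<Rightarrow> ('v \<times> 'v) set \<Rightarrow> ('v list \<Rightarrow> 'k::field) set" where
  "relB V lev E =
     {tmon [v, w] | v w. v \<in> Vplus V lev \<and> w \<in> Vplus V lev \<and> (v, w) \<notin> E} \<union>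
     {(\<lambda>u. case u of [a, b] \<Rightarrow> (if a = v \<and> b \<in> succs E v then 1 else 0) | _ \<Rightarrow> 0)
        | v. v \<in> V \<and> 2 \<le> lev v}"

definition RB :: "'v set \<Rightarrow> ('v \<Rightarrow> nat) \<Rightarrow> ('v \<times> 'v) set \<Rightarrow> ('v list \<Rightarrow> 'k::field) set" where
  "RB V lev E = ideal_gen (Vplus V lev) (relB V lev E)"

text \<open>B_n = span V_n, the bidegree (1,n) part (the ideal R_B has no component of
  word length 1, so B_n is represented faithfully by linear combinations of the
  one-letter words [v], v in V_n).\<close>
definition Bdeg :: "'v set \<Rightarrow> ('v \<Rightarrow> nat) \<Rightarrow> nat \<Rightarrow> ('v list \<Rightarrow> 'k::field) set" where
  "Bdeg V lev n = {x \<in> tensor_alg (Vplus V lev). hom_bideg lev 1 n x}"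

definition kappa :: "'v set \<Rightarrow> ('v \<Rightarrow> nat) \<Rightarrow> ('v \<times> 'v) set \<Rightarrow> nat \<Rightarrow> ('v list \<Rightarrow> 'k::field)
                      \<Rightarrow> ('v list \<Rightarrow> 'k) set" where
  "kappa V lev E n a = {b \<in> Bdeg V lev (n - 1). tmul a b \<in> RB V lev E}"

definition lin_span :: "('v list \<Rightarrow> 'k::field) set \<Rightarrow> ('v list \<Rightarrow> 'k) set" where
  "lin_span L = {(\<lambda>w. \<Sum>l\<in>F. c l * l w) | F c. finite F \<and> F \<subseteq> L}"

definition lin_indep :: "('v list \<Rightarrow> 'k::field) set \<Rightarrow> bool" where
  "lin_indep L \<longleftrightarrow>
     (\<forall>F c. finite F \<and> F \<subseteq> L \<and> (\<lambda>w. \<Sum>l\<in>F. c l * l w) = tzero \<longrightarrow> (\<forall>l \<in> F. c l = 0))"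

definition is_basis_of :: "('v list \<Rightarrow> 'k::field) set \<Rightarrow> ('v list \<Rightarrow> 'k) set \<Rightarrow> bool" where
  "is_basis_of L S \<longleftrightarrow> L \<subseteq> S \<and> lin_indep L \<and> S \<subseteq> lin_span L"

text \<open>A map on the quotient T(A)/I is represented by a map phi on representatives
  that respects congruence modulo I.\<close>
definition graded_alg_aut :: "'v set \<Rightarrow> ('v \<Rightarrow> nat) \<Rightarrow> ('v list \<Rightarrow> 'k::field) set
      \<Rightarrow> (('v list \<Rightarrow> 'k) \<Rightarrow> ('v list \<Rightarrow> 'k)) \<Rightarrow> bool" where
  "graded_alg_aut A lev I \<phi> \<longleftrightarrow>
     (\<forall>x \<in> tensor_alg A. \<phi> x \<in> tensor_alg A) \<and>
     (\<forall>x \<in> tensor_alg A. \<forall>y \<in> tensor_alg A. tsub x y \<in> I \<longrightarrow> tsub (\<phi> x) (\<phi> y) \<in> I) \<and>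
     (\<forall>x \<in> tensor_alg A. \<forall>y \<in> tensor_alg A. tsub (\<phi> (tadd x y)) (tadd (\<phi> x) (\<phi> y)) \<in> I) \<and>
     (\<forall>c. \<forall>x \<in> tensor_alg A. tsub (\<phi> (tscale c x)) (tscale c (\<phi> x)) \<in> I) \<and>
     (\<forall>x \<in> tensor_alg A. \<forall>y \<in> tensor_alg A. tsub (\<phi> (tmul x y)) (tmul (\<phi> x) (\<phi> y)) \<in> I) \<and>
     tsub (\<phi> (tmon [])) (tmon []) \<in> I \<and>
     (\<forall>x \<in> tensor_alg A. \<forall>y \<in> tensor_alg A. tsub (\<phi> x) (\<phi> y) \<in> I \<longrightarrow> tsub x y \<in> I) \<and>
     (\<forall>y \<in> tensor_alg A. \<exists>x \<in> tensor_alg A. tsub (\<phi> x) y \<in> I) \<and>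
     (\<forall>m d. \<forall>x \<in> tensor_alg A. hom_bideg lev m d x \<longrightarrow>
        (\<exists>y \<in> tensor_alg A. hom_bideg lev m d y \<and> tsub (\<phi> x) y \<in> I))"

definition upper_vertex_like :: "'v set \<Rightarrow> ('v \<Rightarrow> nat) \<Rightarrow> ('v \<times> 'v) set \<Rightarrow> nat
      \<Rightarrow> ('v list \<Rightarrow> 'k::field) set \<Rightarrow> bool" where
  "upper_vertex_like V lev E n L \<longleftrightarrow>
     (let Vn = restrV V lev n; En = restrE V lev E n;
          A = Vplus Vn lev; I = (RB Vn lev En :: ('v list \<Rightarrow> 'k) set) in
      \<exists>\<phi>. graded_alg_aut A lev I \<phi> \<and>
        (\<forall>v \<in> V. 1 \<le> lev v \<and> lev v \<le> n - 1 \<longrightarrow> tsub (\<phi> (tmon [v])) (tmon [v]) \<in> I) \<and>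
        (\<forall>v \<in> lay V lev n. \<exists>l \<in> L. tsub (\<phi> (tmon [v])) l \<in> I) \<and>
        (\<forall>l \<in> L. \<exists>v \<in> lay V lev n. tsub (\<phi> (tmon [v])) l \<in> I))"

end

theory Submission
  imports Defs "HOL-Library.Function_Algebras" "HOL.Vector_Spaces"
begin

text \<open>Both directions are read off in B(\<Gamma>|_n), where an automorphism fixing the lower
  vertices is a linear substitution of the top letters.  The key fact is that for a \<in> B_n and
  b \<in> B_{n-1} the product ab lies in R_B iff it lies in the relation ideal of \<Gamma>|_n, and that
  no relation has a component of word length at most one.

  If \<phi> is such an automorphism and \<psi>(v) is the element of L congruent to \<phi>(v), then \<phi> fixes
  B_{n-1}, so \<phi>(vb) \<equiv> \<psi>(v)b and \<kappa>_v = \<kappa>_{\<psi>(v)}.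

  Conversely, substitute \<psi>(v) for every top vertex v.  A relation v\<Sigma>S(v) or vw with |v| = n
  goes to \<psi>(v)b with b \<in> \<kappa>_v = \<kappa>_{\<psi>(v)}, and all other relations are unchanged or sent to
  non-edges; hence the substitution respects the relations.  Each \<psi>(v) only involves vertices q
  with \<kappa>_v \<subseteq> \<kappa>_q, since restricting \<psi>(v)b \<in> R_B to the words starting with q stays in R_B.
  By a Steinitz exchange argument the inverse substitution has the same triangularity, so it
  respects the relations as well.\<close>

interpretation word_fun: vector_space "tscale :: 'k::field \<Rightarrow> ('v list \<Rightarrow> 'k) \<Rightarrow> _"
  by unfold_locales (auto simp: tscale_def fun_eq_iff algebra_simps)

lemma sum_fun_apply: "(\<Sum>x\<in>F. f x) w = (\<Sum>x\<in>F. f x w)"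
  by (induction F rule: infinite_finite_induct) auto

lemma lin_span_eq_span: "lin_span L = word_fun.span L"
  unfolding lin_span_def word_fun.span_explicit by (auto simp: tscale_def sum_fun_apply fun_eq_iff)

lemma lin_indep_iff_independent: "lin_indep L \<longleftrightarrow> word_fun.independent L"
  unfolding lin_indep_def word_fun.independent_explicit_module
  by (auto simp: tscale_def sum_fun_apply fun_eq_iff tzero_def)

lemma lin_indep_subset: "lin_indep L \<Longrightarrow> Y \<subseteq> L \<Longrightarrow> lin_indep Y"
  unfolding lin_indep_def by blast

lemma lin_span_if_indep_card_eq:
  assumes "finite X" "lin_indep Y" "Y \<subseteq> lin_span X" "card Y = card X"
  shows "X \<subseteq> lin_span Y"
proof (rule ccontr)
  assume "\<not> X \<subseteq> lin_span Y"
  then obtain x where x: "x \<in> X" "x \<notin> word_fun.span Y" by (auto simp: lin_span_eq_span)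
  have ind: "word_fun.independent (insert x Y)"
    using assms(2) x(2) by (simp add: lin_indep_iff_independent word_fun.independent_insertI)
  have "insert x Y \<subseteq> word_fun.span X"
    using assms(3) x(1) by (auto simp: lin_span_eq_span intro: word_fun.span_base)
  from word_fun.independent_span_bound[OF assms(1) ind this]
  have "finite (insert x Y)" "card (insert x Y) \<le> card X" by auto
  moreover have "x \<notin> Y" using x(2) word_fun.span_base by blast
  ultimately show False using assms(4) by simp
qed

lemma lin_span_image_obtain_coeffs:
  assumes x: "x \<in> lin_span (\<psi> ` T)" and inj: "inj_on \<psi> T" and finT: "finite T"
  obtains d where "x = (\<lambda>w. \<Sum>v\<in>T. d v * \<psi> v w)"
proof -
  obtain F c where F: "finite F" "F \<subseteq> \<psi> ` T" and xe: "x = (\<lambda>w. \<Sum>l\<in>F. c l * l w)"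
    using x by (auto simp: lin_span_def)
  define T' where "T' = {v \<in> T. \<psi> v \<in> F}"
  have bij: "bij_betw \<psi> T' F" unfolding T'_def bij_betw_def using inj F(2)
    by (auto simp: inj_on_def image_def)
  define d where "d v = (if v \<in> T' then c (\<psi> v) else 0)" for v
  have "(\<Sum>v\<in>T. d v * \<psi> v w) = (\<Sum>l\<in>F. c l * l w)" for w
  proof -
    have "(\<Sum>v\<in>T. d v * \<psi> v w) = (\<Sum>v\<in>T. if v \<in> T' then c (\<psi> v) * \<psi> v w else 0)"
      by (intro sum.cong refl) (auto simp: d_def)
    also have "\<dots> = (\<Sum>v\<in>T \<inter> T'. c (\<psi> v) * \<psi> v w)"
      by (simp add: sum.inter_restrict[OF finT])
    also have "T \<inter> T' = T'" by (auto simp: T'_def)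
    also have "(\<Sum>v\<in>T'. c (\<psi> v) * \<psi> v w) = (\<Sum>l\<in>F. c l * l w)"
      by (rule sum.reindex_bij_betw[OF bij, of "\<lambda>l. c l * l w"])
    finally show ?thesis .
  qed
  then show thesis using xe by (intro that[of d]) auto
qed

lemma sum_in_lin_span_image:
  assumes fin: "finite S" and inj: "inj_on f S"
  shows "(\<lambda>w. \<Sum>q\<in>S. c q * f q w) \<in> lin_span (f ` S)"
proof -
  define c' where "c' l = c (the_inv_into S f l)" for l
  have "(\<lambda>w. \<Sum>l\<in>f ` S. c' l * l w) = (\<lambda>w. \<Sum>q\<in>S. c q * f q w)"
    by (subst sum.reindex[OF inj]) (auto simp: c'_def the_inv_into_f_f[OF inj] intro!: sum.cong)
  moreover have "(\<lambda>w. \<Sum>l\<in>f ` S. c' l * l w) \<in> lin_span (f ` S)"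
    unfolding lin_span_def using fin by blast
  ultimately show ?thesis by simp
qed

lemma lin_indep_image_coeffs_unique:
  assumes ind: "lin_indep (\<psi> ` T)" and inj: "inj_on \<psi> T" and fin: "finite T"
    and eq: "(\<lambda>w. \<Sum>r\<in>T. a r * \<psi> r w) = (\<lambda>w. \<Sum>r\<in>T. b r * \<psi> r w)"
    and r: "r \<in> T"
  shows "a r = b r"
proof -
  define c where "c l = a (the_inv_into T \<psi> l) - b (the_inv_into T \<psi> l)" for l
  have "(\<Sum>l\<in>\<psi> ` T. c l * l w) = (\<Sum>r\<in>T. a r * \<psi> r w) - (\<Sum>r\<in>T. b r * \<psi> r w)" for w
    by (subst sum.reindex[OF inj])
      (simp add: c_def the_inv_into_f_f[OF inj] algebra_simps sum_subtractf)
  then have "(\<lambda>w. \<Sum>l\<in>\<psi> ` T. c l * l w) = tzero"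
    using eq by (simp add: tzero_def fun_eq_iff)
  then have "c (\<psi> r) = 0" using ind fin r unfolding lin_indep_def by blast
  then show ?thesis by (simp add: c_def the_inv_into_f_f[OF inj r])
qed

section \<open>The tensor algebra\<close>

lemma tensor_algI:
  "finite {w. x w \<noteq> 0} \<Longrightarrow> (\<And>w. x w \<noteq> 0 \<Longrightarrow> set w \<subseteq> A) \<Longrightarrow> x \<in> tensor_alg A"
  by (auto simp: tensor_alg_def)

lemma tensor_algD:
  "x \<in> tensor_alg A \<Longrightarrow> finite {w. x w \<noteq> 0}"
  "x \<in> tensor_alg A \<Longrightarrow> x w \<noteq> 0 \<Longrightarrow> set w \<subseteq> A"
  by (auto simp: tensor_alg_def)

lemma tensor_alg_mono: "A \<subseteq> B \<Longrightarrow> tensor_alg A \<subseteq> tensor_alg B"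
  by (auto simp: tensor_alg_def)

lemma tzero_in_tensor_alg: "tzero \<in> tensor_alg A"
  by (auto simp: tensor_alg_def tzero_def)

lemma tensor_alg_pointwise:
  assumes "x \<in> tensor_alg A" "y \<in> tensor_alg A" and "\<And>w. f (x w) (y w) \<noteq> 0 \<Longrightarrow> x w \<noteq> 0 \<or> y w \<noteq> 0"
  shows "(\<lambda>w. f (x w) (y w)) \<in> tensor_alg A"
proof (rule tensor_algI)
  have "{w. f (x w) (y w) \<noteq> 0} \<subseteq> {w. x w \<noteq> 0} \<union> {w. y w \<noteq> 0}" using assms(3) by auto
  then show "finite {w. f (x w) (y w) \<noteq> 0}"
    using assms(1,2) by (auto intro: finite_subset dest: tensor_algD)
  show "set w \<subseteq> A" if "f (x w) (y w) \<noteq> 0" for w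
    using assms that by (auto dest: tensor_algD)
qed

lemma tadd_in_tensor_alg: "x \<in> tensor_alg A \<Longrightarrow> y \<in> tensor_alg A \<Longrightarrow> tadd x y \<in> tensor_alg A"
  unfolding tadd_def by (rule tensor_alg_pointwise) auto

lemma tsub_in_tensor_alg: "x \<in> tensor_alg A \<Longrightarrow> y \<in> tensor_alg A \<Longrightarrow> tsub x y \<in> tensor_alg A"
  unfolding tsub_def by (rule tensor_alg_pointwise) auto

lemma tscale_in_tensor_alg: "x \<in> tensor_alg A \<Longrightarrow> tscale c x \<in> tensor_alg A"
  unfolding tscale_def by (rule tensor_alg_pointwise[where y = x]) auto

lemma tmul_nonzero_split:
  "tmul x y w \<noteq> 0 \<Longrightarrow> \<exists>i\<le>length w. x (take i w) \<noteq> 0 \<and> y (drop i w) \<noteq> 0"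
  unfolding tmul_def by (metis (no_types, lifting) atMost_iff mult_eq_0_iff sum.neutral)

lemma tmul_in_tensor_alg: "x \<in> tensor_alg A \<Longrightarrow> y \<in> tensor_alg A \<Longrightarrow> tmul x y \<in> tensor_alg A"
proof (rule tensor_algI)
  assume x: "x \<in> tensor_alg A" and y: "y \<in> tensor_alg A"
  have "{w. tmul x y w \<noteq> 0} \<subseteq> (\<lambda>(a,b). a @ b) ` ({w. x w \<noteq> 0} \<times> {w. y w \<noteq> 0})"
  proof
    fix w assume "w \<in> {w. tmul x y w \<noteq> 0}"
    then obtain i where "x (take i w) \<noteq> 0" "y (drop i w) \<noteq> 0" using tmul_nonzero_split by blast
    then show "w \<in> (\<lambda>(a,b). a @ b) ` ({w. x w \<noteq> 0} \<times> {w. y w \<noteq> 0})"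
      by (auto intro!: image_eqI[of _ _ "(take i w, drop i w)"])
  qed
  moreover have "finite ((\<lambda>(a,b). a @ b) ` ({w. x w \<noteq> 0} \<times> {w. y w \<noteq> 0}))"
    using x y by (auto dest: tensor_algD)
  ultimately show "finite {w. tmul x y w \<noteq> 0}" by (rule finite_subset)
  fix w assume "tmul x y w \<noteq> 0"
  then obtain i where "x (take i w) \<noteq> 0" "y (drop i w) \<noteq> 0" using tmul_nonzero_split by blast
  then have "set (take i w) \<subseteq> A" "set (drop i w) \<subseteq> A" using x y by (auto dest: tensor_algD)
  then show "set w \<subseteq> A" by (metis append_take_drop_id le_sup_iff set_append)
qed

lemma tmon_in_tensor_alg: "set w \<subseteq> A \<Longrightarrow> tmon w \<in> tensor_alg A"
  by (auto simp: tensor_alg_def tmon_def)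

lemma tmul_tsub_left: "tmul (tsub x y) z = tsub (tmul x z) (tmul y z)"
  by (simp add: tmul_def tsub_def algebra_simps sum_subtractf fun_eq_iff)

lemma tmul_tsub_right: "tmul z (tsub x y) = tsub (tmul z x) (tmul z y)"
  by (simp add: tmul_def tsub_def algebra_simps sum_subtractf fun_eq_iff)

lemma tmul_sum_left:
  "finite S \<Longrightarrow> tmul (\<lambda>w. \<Sum>q\<in>S. c q * f q w) b = (\<lambda>w. \<Sum>q\<in>S. c q * tmul (f q) b w)"
  by (simp add: tmul_def fun_eq_iff sum_distrib_left sum_distrib_right mult.assoc sum.swap[of _ S])

lemma tmul_tmon: "tmul (tmon u) (tmon v) = (tmon (u @ v) :: 'v list \<Rightarrow> 'k::field)"
proof
  fix w :: "'v list"
  have split_iff: "(take i w = u \<and> drop i w = v) \<longleftrightarrow> (i = length u \<and> w = u @ v)" if "i \<le> length w" for i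
    using that by (metis append_eq_conv_conj append_take_drop_id length_take min.absorb2)
  have "tmul (tmon u) (tmon v) w = (\<Sum>i\<le>length w. if i = length u \<and> w = u @ v then (1::'k) else 0)"
    unfolding tmul_def tmon_def by (intro sum.cong refl) (auto simp: split_iff[symmetric])
  also have "\<dots> = tmon (u @ v) w"
    by (auto simp: tmon_def sum.delta' cong: if_cong)
  finally show "tmul (tmon u) (tmon v) w = (tmon (u @ v) w :: 'k)" .
qed

lemma tmon_Cons: "tmon (a # u) = tmul (tmon [a]) (tmon u)"
  by (simp add: tmul_tmon)

lemma tensor_alg_monomial_expansion:
  "x \<in> tensor_alg A \<Longrightarrow> x = (\<lambda>w. \<Sum>u\<in>{u. x u \<noteq> 0}. x u * tmon u w)"
proof
  fix w assume x: "x \<in> tensor_alg A"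
  have "(\<Sum>u\<in>{u. x u \<noteq> 0}. x u * tmon u w) = (\<Sum>u\<in>{u. x u \<noteq> 0}. if u = w then x u else 0)"
    by (intro sum.cong refl) (auto simp: tmon_def)
  also have "\<dots> = x w" using tensor_algD(1)[OF x] by (auto simp: sum.delta')
  finally show "x w = (\<Sum>u\<in>{u. x u \<noteq> 0}. x u * tmon u w)" by simp
qed

definition single_letter :: "('v list \<Rightarrow> 'k::field) \<Rightarrow> bool" where
  "single_letter x \<longleftrightarrow> (\<forall>w. x w \<noteq> 0 \<longrightarrow> length w = 1)"

lemma single_letter_tmon: "single_letter (tmon [v])"
  by (auto simp: single_letter_def tmon_def)

lemma tmul_single_letter:
  assumes p: "single_letter p" and q: "single_letter q"
  shows "tmul p q w = (case w of [a, b] \<Rightarrow> p [a] * q [b] | _ \<Rightarrow> 0)"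
proof -
  have pz: "p u = 0" and qz: "q u = 0" if "length u \<noteq> 1" for u
    using p q that by (auto simp: single_letter_def)
  show ?thesis
  proof (cases "length w = 2")
    case True
    then obtain a b where "w = [a, b]" by (auto simp: numeral_2_eq_2 length_Suc_conv)
    then show ?thesis by (simp add: tmul_def pz qz atMost_Suc)
  next
    case False
    have "length (take i w) \<noteq> 1 \<or> length (drop i w) \<noteq> 1" if "i \<le> length w" for i
      using False that by auto
    then have "tmul p q w = 0" unfolding tmul_def by (intro sum.neutral) (metis atMost_iff mult_eq_0_iff pz qz)
    with False show ?thesis by (auto split: list.splits)
  qed
qed

lemma tensor_alg_ideal: "is_two_sided_ideal A (tensor_alg A)"
  by (auto simp: is_two_sided_ideal_def tzero_in_tensor_alg tadd_in_tensor_alg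
      tscale_in_tensor_alg tmul_in_tensor_alg)

lemma ideal_gen_base: "G \<subseteq> ideal_gen A G"
  by (auto simp: ideal_gen_def)

lemma ideal_gen_min: "is_two_sided_ideal A J \<Longrightarrow> G \<subseteq> J \<Longrightarrow> ideal_gen A G \<subseteq> J"
  by (auto simp: ideal_gen_def)

context
  fixes A :: "'v set" and I :: "('v list \<Rightarrow> 'k::field) set"
  assumes I: "is_two_sided_ideal A I"
begin

lemma ideal_tzero: "tzero \<in> I"
  using I by (auto simp: is_two_sided_ideal_def)

lemma ideal_tadd: "x \<in> I \<Longrightarrow> y \<in> I \<Longrightarrow> tadd x y \<in> I"
  using I by (auto simp: is_two_sided_ideal_def)

lemma ideal_tscale: "x \<in> I \<Longrightarrow> tscale c x \<in> I"
  using I by (auto simp: is_two_sided_ideal_def)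

lemma ideal_tmul_left: "a \<in> tensor_alg A \<Longrightarrow> x \<in> I \<Longrightarrow> tmul a x \<in> I"
  using I by (auto simp: is_two_sided_ideal_def)

lemma ideal_tmul_right: "a \<in> tensor_alg A \<Longrightarrow> x \<in> I \<Longrightarrow> tmul x a \<in> I"
  using I by (auto simp: is_two_sided_ideal_def)

lemma ideal_sum: "finite S \<Longrightarrow> (\<And>u. u \<in> S \<Longrightarrow> f u \<in> I) \<Longrightarrow> (\<lambda>w. \<Sum>u\<in>S. f u w) \<in> I"
proof (induction S rule: finite_induct)
  case empty
  then show ?case using ideal_tzero by (simp add: tzero_def)
next
  case (insert a S)
  then have "tadd (f a) (\<lambda>w. \<Sum>u\<in>S. f u w) \<in> I" by (intro ideal_tadd) auto
  then show ?case using insert by (simp add: tadd_def)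
qed

lemma ideal_tscale_cancel: "tscale c x \<in> I \<Longrightarrow> c \<noteq> 0 \<Longrightarrow> x \<in> I"
  using ideal_tscale[of "tscale c x" "inverse c"] by (simp add: tscale_def mult.assoc[symmetric])

lemma ideal_cong_mem_iff:
  assumes "tsub x y \<in> I" shows "x \<in> I \<longleftrightarrow> y \<in> I"
proof
  assume "x \<in> I"
  then have "tadd x (tscale (-1) (tsub x y)) \<in> I" using assms by (intro ideal_tadd ideal_tscale)
  then show "y \<in> I" by (simp add: tadd_def tscale_def tsub_def)
next
  assume "y \<in> I"
  then have "tadd (tsub x y) y \<in> I" using assms by (intro ideal_tadd)
  then show "x \<in> I" by (simp add: tadd_def tsub_def)
qed

lemma ideal_cong_refl: "tsub x x \<in> I"
  using ideal_tzero by (simp add: tsub_def tzero_def)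

lemma ideal_cong_sym: "tsub x y \<in> I \<Longrightarrow> tsub y x \<in> I"
  using ideal_tscale[of "tsub x y" "-1"] by (simp add: tscale_def tsub_def)

lemma ideal_cong_trans: "tsub x y \<in> I \<Longrightarrow> tsub y z \<in> I \<Longrightarrow> tsub x z \<in> I"
  using ideal_tadd[of "tsub x y" "tsub y z"] by (simp add: tadd_def tsub_def)

lemma ideal_cong_tadd:
  "tsub x x' \<in> I \<Longrightarrow> tsub y y' \<in> I \<Longrightarrow> tsub (tadd x y) (tadd x' y') \<in> I"
  using ideal_tadd[of "tsub x x'" "tsub y y'"] by (simp add: tadd_def tsub_def algebra_simps)

lemma ideal_cong_tscale: "tsub x x' \<in> I \<Longrightarrow> tsub (tscale c x) (tscale c x') \<in> I"
  using ideal_tscale[of "tsub x x'" c] by (simp add: tscale_def tsub_def algebra_simps)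

lemma ideal_cong_tmul:
  assumes "x' \<in> tensor_alg A" "y \<in> tensor_alg A" "tsub x x' \<in> I" "tsub y y' \<in> I"
  shows "tsub (tmul x y) (tmul x' y') \<in> I"
proof -
  have "tadd (tmul (tsub x x') y) (tmul x' (tsub y y')) \<in> I"
    using assms by (intro ideal_tadd ideal_tmul_left ideal_tmul_right)
  moreover have "tadd (tmul (tsub x x') y) (tmul x' (tsub y y')) = tsub (tmul x y) (tmul x' y')"
    by (simp only: tmul_tsub_left tmul_tsub_right) (simp add: tadd_def tsub_def fun_eq_iff)
  ultimately show ?thesis by simp
qed

lemma ideal_inter_subalg:
  assumes "B \<subseteq> A" shows "is_two_sided_ideal B (I \<inter> tensor_alg B)"
  using tensor_alg_mono[OF assms] unfolding is_two_sided_ideal_def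
  by (auto intro: ideal_tzero ideal_tadd ideal_tscale ideal_tmul_left ideal_tmul_right
      tzero_in_tensor_alg tadd_in_tensor_alg tscale_in_tensor_alg tmul_in_tensor_alg)

end

lemma ideal_gen_ideal:
  assumes "G \<subseteq> tensor_alg A" shows "is_two_sided_ideal A (ideal_gen A G)"
proof -
  let ?F = "{I. is_two_sided_ideal A I \<and> G \<subseteq> I}"
  have "tensor_alg A \<in> ?F" using tensor_alg_ideal assms by blast
  then show ?thesis
    unfolding ideal_gen_def is_two_sided_ideal_def[of A "\<Inter>?F"]
    by (auto intro: ideal_tzero ideal_tadd ideal_tscale ideal_tmul_left ideal_tmul_right)
qed

lemma sum_tmon_in_tensor_alg:
  assumes "finite Q" "Q \<subseteq> A" shows "(\<lambda>w. \<Sum>q\<in>Q. c q * tmon [q] w) \<in> tensor_alg A"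
proof -
  have "(\<lambda>w. \<Sum>q\<in>Q. tscale (c q) (tmon [q]) w) \<in> tensor_alg A"
    using assms by (intro ideal_sum[OF tensor_alg_ideal] tscale_in_tensor_alg tmon_in_tensor_alg) auto
  then show ?thesis by (simp add: tscale_def)
qed

lemma ideal_preimage:
  assumes I: "is_two_sided_ideal A I"
    and f_T: "\<And>x. x \<in> tensor_alg A \<Longrightarrow> f x \<in> tensor_alg A"
    and f_tzero: "f tzero = tzero"
    and f_tadd: "\<And>x y. f (tadd x y) = tadd (f x) (f y)"
    and f_tscale: "\<And>c x. f (tscale c x) = tscale c (f x)"
    and f_tmul: "\<And>x y. f (tmul x y) = tmul (f x) (f y)"
  shows "is_two_sided_ideal A {x \<in> tensor_alg A. f x \<in> I}"
  unfolding is_two_sided_ideal_def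
  by (auto simp: f_tzero f_tadd f_tscale f_tmul
      intro: ideal_tzero[OF I] ideal_tadd[OF I] ideal_tscale[OF I] ideal_tmul_left[OF I]
        ideal_tmul_right[OF I] f_T tzero_in_tensor_alg tadd_in_tensor_alg tscale_in_tensor_alg
        tmul_in_tensor_alg)

context
  fixes A :: "'v set" and lev :: "'v \<Rightarrow> nat" and I :: "('v list \<Rightarrow> 'k::field) set"
    and \<phi> :: "('v list \<Rightarrow> 'k) \<Rightarrow> 'v list \<Rightarrow> 'k"
  assumes I: "is_two_sided_ideal A I" and \<phi>: "graded_alg_aut A lev I \<phi>"
begin

lemma aut_in_tensor_alg: "x \<in> tensor_alg A \<Longrightarrow> \<phi> x \<in> tensor_alg A"
  using \<phi> unfolding graded_alg_aut_def by blast

lemma aut_cong_iff: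
  "x \<in> tensor_alg A \<Longrightarrow> y \<in> tensor_alg A \<Longrightarrow> tsub (\<phi> x) (\<phi> y) \<in> I \<longleftrightarrow> tsub x y \<in> I"
  using \<phi> unfolding graded_alg_aut_def by blast

lemma aut_tadd:
  "x \<in> tensor_alg A \<Longrightarrow> y \<in> tensor_alg A \<Longrightarrow> tsub (\<phi> (tadd x y)) (tadd (\<phi> x) (\<phi> y)) \<in> I"
  using \<phi> unfolding graded_alg_aut_def by blast

lemma aut_tscale: "x \<in> tensor_alg A \<Longrightarrow> tsub (\<phi> (tscale c x)) (tscale c (\<phi> x)) \<in> I"
  using \<phi> unfolding graded_alg_aut_def by blast

lemma aut_tmul:
  "x \<in> tensor_alg A \<Longrightarrow> y \<in> tensor_alg A \<Longrightarrow> tsub (\<phi> (tmul x y)) (tmul (\<phi> x) (\<phi> y)) \<in> I"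
  using \<phi> unfolding graded_alg_aut_def by blast

lemma aut_tzero: "tsub (\<phi> tzero) tzero \<in> I"
  using aut_tscale[OF tzero_in_tensor_alg, of 0] by (simp add: tscale_def tzero_def)

lemma aut_mem_ideal_iff:
  assumes "x \<in> tensor_alg A" shows "\<phi> x \<in> I \<longleftrightarrow> x \<in> I"
proof -
  have "\<phi> tzero \<in> I" using aut_tzero by (simp add: tsub_def tzero_def)
  moreover have "tsub (\<phi> x) (tsub (\<phi> x) (\<phi> tzero)) = \<phi> tzero" by (simp add: tsub_def)
  ultimately have "\<phi> x \<in> I \<longleftrightarrow> tsub (\<phi> x) (\<phi> tzero) \<in> I" by (simp add: ideal_cong_mem_iff[OF I])
  also have "\<dots> \<longleftrightarrow> x \<in> I"
    using aut_cong_iff[OF assms tzero_in_tensor_alg] by (simp add: tsub_def tzero_def)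
  finally show ?thesis .
qed

lemma aut_fixes_combination:
  assumes "finite Q" "Q \<subseteq> A" "\<And>q. q \<in> Q \<Longrightarrow> tsub (\<phi> (tmon [q])) (tmon [q]) \<in> I"
  shows "tsub (\<phi> (\<lambda>w. \<Sum>q\<in>Q. c q * tmon [q] w)) (\<lambda>w. \<Sum>q\<in>Q. c q * tmon [q] w) \<in> I"
  using assms
proof (induction Q rule: finite_induct)
  case empty
  then show ?case using aut_tzero by (simp add: tzero_def)
next
  case (insert a Q)
  let ?x = "tscale (c a) (tmon [a])" and ?S = "\<lambda>w. \<Sum>q\<in>Q. c q * tmon [q] w"
  have a: "a \<in> A" and Q: "Q \<subseteq> A" using insert.prems(1) by auto
  have x: "?x \<in> tensor_alg A" using a by (intro tscale_in_tensor_alg tmon_in_tensor_alg) simp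
  have S: "?S \<in> tensor_alg A" by (rule sum_tmon_in_tensor_alg[OF insert.hyps(1) Q])
  have "tsub (\<phi> ?x) (tscale (c a) (\<phi> (tmon [a]))) \<in> I"
    by (rule aut_tscale[OF tmon_in_tensor_alg]) (use a in simp)
  moreover have "tsub (tscale (c a) (\<phi> (tmon [a]))) ?x \<in> I"
    by (rule ideal_cong_tscale[OF I insert.prems(2)]) simp
  ultimately have "tsub (\<phi> ?x) ?x \<in> I" by (rule ideal_cong_trans[OF I])
  moreover have "tsub (\<phi> ?S) ?S \<in> I" using Q insert.prems(2) by (intro insert.IH) auto
  ultimately have "tsub (tadd (\<phi> ?x) (\<phi> ?S)) (tadd ?x ?S) \<in> I" by (rule ideal_cong_tadd[OF I])
  then have "tsub (\<phi> (tadd ?x ?S)) (tadd ?x ?S) \<in> I"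
    by (rule ideal_cong_trans[OF I aut_tadd[OF x S]])
  moreover have "tadd ?x ?S = (\<lambda>w. \<Sum>q\<in>insert a Q. c q * tmon [q] w)"
    using insert.hyps by (simp add: tadd_def tscale_def)
  ultimately show ?case by simp
qed

end

definition restrict_words :: "'v list set \<Rightarrow> ('v list \<Rightarrow> 'k::field) \<Rightarrow> 'v list \<Rightarrow> 'k" where
  "restrict_words S x = (\<lambda>w. if w \<in> S then x w else 0)"

definition no_short_words :: "('v list \<Rightarrow> 'k::field) \<Rightarrow> bool" where
  "no_short_words x \<longleftrightarrow> (\<forall>w. length w \<le> 1 \<longrightarrow> x w = 0)"

lemma restrict_words_tmon: "restrict_words S (tmon u) = (if u \<in> S then tmon u else tzero)"
  by (auto simp: restrict_words_def tmon_def tzero_def fun_eq_iff)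

lemma restrict_words_all: "(\<And>w. x w \<noteq> 0 \<Longrightarrow> w \<in> S) \<Longrightarrow> restrict_words S x = x"
  by (auto simp: restrict_words_def fun_eq_iff)

lemma restrict_words_none: "(\<And>w. x w \<noteq> 0 \<Longrightarrow> w \<notin> S) \<Longrightarrow> restrict_words S x = tzero"
  by (auto simp: restrict_words_def fun_eq_iff tzero_def)

lemma tmul_length2_left:
  assumes "no_short_words x" "length w = 2" shows "tmul a x w = a [] * x w"
proof -
  obtain p q where "w = [p, q]" using assms(2) by (auto simp: length_Suc_conv numeral_2_eq_2)
  with assms(1) show ?thesis by (simp add: tmul_def atMost_Suc no_short_words_def)
qed

lemma tmul_length2_right:
  assumes "no_short_words x" "length w = 2" shows "tmul x a w = x w * a []"
proof -
  obtain p q where "w = [p, q]" using assms(2) by (auto simp: length_Suc_conv numeral_2_eq_2)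
  with assms(1) show ?thesis by (simp add: tmul_def atMost_Suc no_short_words_def)
qed

lemma no_short_words_tmul:
  assumes "no_short_words x" shows "no_short_words (tmul a x)" "no_short_words (tmul x a)"
  using assms by (auto simp: no_short_words_def tmul_def intro!: sum.neutral)

text \<open>On words of length two, multiplying an element without short words by a only scales it
  by the constant term of a; so the length-two part of an ideal generated by such elements is
  generated, as a vector space, by the length-two parts of the generators.\<close>
lemma ideal_gen_restrict_length2:
  fixes G :: "('v list \<Rightarrow> 'k::field) set"
  assumes G: "G \<subseteq> tensor_alg A" and G_no_short: "\<forall>g\<in>G. no_short_words g"
    and I': "is_two_sided_ideal A' I'"
    and S: "\<forall>w\<in>S. length w = 2"
    and GS: "\<forall>g\<in>G. restrict_words S g \<in> I'"
    and x: "x \<in> ideal_gen A G"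
  shows "no_short_words x \<and> restrict_words S x \<in> I'"
proof -
  let ?J = "{x \<in> tensor_alg A. no_short_words x \<and> restrict_words S x \<in> I'}"
  have "is_two_sided_ideal A ?J"
    unfolding is_two_sided_ideal_def
  proof (intro conjI ballI allI)
    show "?J \<subseteq> tensor_alg A" by blast
    show "tzero \<in> ?J" using ideal_tzero[OF I'] tzero_in_tensor_alg
      by (auto simp: no_short_words_def tzero_def restrict_words_def)
    fix x assume x: "x \<in> ?J"
    {
      fix y assume y: "y \<in> ?J"
      have "restrict_words S (tadd x y) = tadd (restrict_words S x) (restrict_words S y)"
        by (auto simp: restrict_words_def tadd_def)
      then show "tadd x y \<in> ?J" using x y ideal_tadd[OF I'] tadd_in_tensor_alg
        by (auto simp: no_short_words_def tadd_def)
    }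
    fix c
    have "restrict_words S (tscale c x) = tscale c (restrict_words S x)"
      by (auto simp: restrict_words_def tscale_def)
    then show "tscale c x \<in> ?J" using x ideal_tscale[OF I'] tscale_in_tensor_alg
      by (auto simp: no_short_words_def tscale_def)
  next
    fix a :: "'v list \<Rightarrow> 'k" and x assume a: "a \<in> tensor_alg A" and x: "x \<in> ?J"
    have "restrict_words S (tmul a x) = tscale (a []) (restrict_words S x)"
      "restrict_words S (tmul x a) = tscale (a []) (restrict_words S x)"
      using x S by (auto simp: restrict_words_def tscale_def tmul_length2_left
          tmul_length2_right fun_eq_iff)
    then show "tmul a x \<in> ?J" "tmul x a \<in> ?J"
      using x a ideal_tscale[OF I'] tmul_in_tensor_alg no_short_words_tmul by auto
  qed
  moreover have "G \<subseteq> ?J" using G G_no_short GS by blast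
  ultimately have "ideal_gen A G \<subseteq> ?J" by (rule ideal_gen_min)
  then show ?thesis using x by blast
qed

section \<open>Linear substitution of letters\<close>

definition words :: "'v set \<Rightarrow> nat \<Rightarrow> 'v list set" where
  "words A m = {w. set w \<subseteq> A \<and> length w = m}"

lemma finite_words: "finite A \<Longrightarrow> finite (words A m)"
  unfolding words_def by (rule finite_lists_length_eq)

fun word_coeff :: "('v \<Rightarrow> 'v \<Rightarrow> 'k::field) \<Rightarrow> 'v list \<Rightarrow> 'v list \<Rightarrow> 'k" where
  "word_coeff M (a # as) (b # bs) = M a b * word_coeff M as bs"
| "word_coeff M _ _ = 1"

lemma word_coeff_split:
  "length a = length w \<Longrightarrow>
    word_coeff M a w = word_coeff M (take i a) (take i w) * word_coeff M (drop i a) (drop i w)"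
proof (induction a arbitrary: w i)
  case Nil then show ?case by simp
next
  case (Cons x a)
  then obtain y w' where w: "w = y # w'" by (cases w) auto
  show ?case using Cons w by (cases i) auto
qed

lemma word_coeff_nonzero:
  "word_coeff M a w \<noteq> 0 \<Longrightarrow> length a = length w \<Longrightarrow> i < length w \<Longrightarrow> M (a ! i) (w ! i) \<noteq> 0"
proof (induction a arbitrary: w i)
  case Nil then show ?case by simp
next
  case (Cons x a)
  then obtain y w' where w: "w = y # w'" by (cases w) auto
  show ?case using Cons w by (cases i) auto
qed

lemma word_coeff_identity:
  "(\<forall>p\<in>set a. \<forall>q. M p q = (if p = q then 1 else 0)) \<Longrightarrow> length a = length w \<Longrightarrow>
    word_coeff M a w = (if a = w then 1 else 0)"
proof (induction a arbitrary: w)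
  case Nil then show ?case by simp
next
  case (Cons x a)
  then obtain y w' where w: "w = y # w'" by (cases w) auto
  show ?case using Cons w by auto
qed

text \<open>subst A M is the algebra endomorphism of T(A) sending each letter p to
  \<Sum>q. M p q \<cdot> q; the coefficient of w in the image of the word a is word_coeff M a w.\<close>
definition subst :: "'v set \<Rightarrow> ('v \<Rightarrow> 'v \<Rightarrow> 'k::field) \<Rightarrow> ('v list \<Rightarrow> 'k) \<Rightarrow> 'v list \<Rightarrow> 'k" where
  "subst A M x = (\<lambda>w. \<Sum>a\<in>words A (length w). x a * word_coeff M a w)"

lemma subst_tadd: "subst A M (tadd x y) = tadd (subst A M x) (subst A M y)"
  by (simp add: subst_def tadd_def fun_eq_iff algebra_simps sum.distrib)
lemma subst_tsub: "subst A M (tsub x y) = tsub (subst A M x) (subst A M y)"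
  by (simp add: subst_def tsub_def fun_eq_iff algebra_simps sum_subtractf)
lemma subst_tscale: "subst A M (tscale c x) = tscale c (subst A M x)"
  by (simp add: subst_def tscale_def fun_eq_iff algebra_simps sum_distrib_left)
lemma subst_tzero: "subst A M tzero = tzero"
  by (simp add: subst_def tzero_def fun_eq_iff)

lemma subst_sum:
  "finite S \<Longrightarrow> subst A M (\<lambda>w. \<Sum>u\<in>S. c u * f u w) = (\<lambda>w. \<Sum>u\<in>S. c u * subst A M (f u) w)"
  by (simp add: subst_def fun_eq_iff sum_distrib_left sum_distrib_right mult.assoc sum.swap[of _ S])

lemma subst_tmon:
  "finite A \<Longrightarrow> set u \<subseteq> A \<Longrightarrow>
    subst A M (tmon u) w = (if length w = length u then word_coeff M u w else 0)"
proof -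
  assume A: "finite A" and u: "set u \<subseteq> A"
  have "subst A M (tmon u) w = (\<Sum>a\<in>words A (length w). (if a = u then word_coeff M a w else 0))"
    unfolding subst_def tmon_def by (intro sum.cong refl) auto
  also have "\<dots> = (if u \<in> words A (length w) then word_coeff M u w else 0)"
    by (rule sum.delta[OF finite_words[OF A]])
  finally show ?thesis using u by (auto simp: words_def)
qed

lemma subst_tmon_Nil: "finite A \<Longrightarrow> subst A M (tmon []) = tmon []"
proof
  fix w :: "'a list"
  assume A: "finite A"
  have "subst A M (tmon []) w = (if length w = 0 then word_coeff M [] w else 0)"
    using subst_tmon[OF A, of "[]" M w] by simp
  then show "subst A M (tmon []) w = tmon [] w" by (cases w) (auto simp: tmon_def)
qed

lemma subst_tmon_single:
  "finite A \<Longrightarrow> v \<in> A \<Longrightarrow> subst A M (tmon [v]) = (\<lambda>w. case w of [q] \<Rightarrow> M v q | _ \<Rightarrow> 0)"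
proof
  fix w assume "finite A" "v \<in> A"
  then show "subst A M (tmon [v]) w = (case w of [q] \<Rightarrow> M v q | _ \<Rightarrow> 0)"
    by (cases w rule: remdups_adj.cases) (auto simp: subst_tmon)
qed

lemma sum_words_split:
  "i \<le> m \<Longrightarrow>
    (\<Sum>c\<in>words A m. f (take i c) (drop i c)) = (\<Sum>p\<in>words A i \<times> words A (m - i). f (fst p) (snd p))"
  by (rule sum.reindex_bij_witness[where i = "\<lambda>p. fst p @ snd p" and j = "\<lambda>c. (take i c, drop i c)"])
    (auto simp: words_def dest: in_set_takeD in_set_dropD)

lemma subst_tmul:
  assumes A: "finite A"
  shows "subst A M (tmul x y) = tmul (subst A M x) (subst A M y)"
proof
  fix w :: "'a list"
  define m where "m = length w"
  have "subst A M (tmul x y) w = (\<Sum>c\<in>words A m. \<Sum>i\<le>m. x (take i c) * y (drop i c) * word_coeff M c w)"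
    unfolding subst_def m_def tmul_def by (intro sum.cong refl) (auto simp: words_def sum_distrib_right)
  also have "\<dots> = (\<Sum>i\<le>m. \<Sum>c\<in>words A m. x (take i c) * y (drop i c) * word_coeff M c w)"
    by (rule sum.swap)
  also have "\<dots> = (\<Sum>i\<le>m. \<Sum>p\<in>words A i \<times> words A (m - i).
      x (fst p) * word_coeff M (fst p) (take i w) * (y (snd p) * word_coeff M (snd p) (drop i w)))"
  proof (rule sum.cong[OF refl])
    fix i assume "i \<in> {..m}"
    have "(\<Sum>c\<in>words A m. x (take i c) * y (drop i c) * word_coeff M c w) =
        (\<Sum>c\<in>words A m. x (take i c) * word_coeff M (take i c) (take i w) *
          (y (drop i c) * word_coeff M (drop i c) (drop i w)))"
      by (intro sum.cong refl) (simp add: word_coeff_split[of _ w] words_def m_def)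
    also have "\<dots> = (\<Sum>p\<in>words A i \<times> words A (m - i).
        x (fst p) * word_coeff M (fst p) (take i w) * (y (snd p) * word_coeff M (snd p) (drop i w)))"
      by (rule sum_words_split) (use \<open>i \<in> {..m}\<close> in simp)
    finally show "(\<Sum>c\<in>words A m. x (take i c) * y (drop i c) * word_coeff M c w) = \<dots>" .
  qed
  also have "\<dots> = tmul (subst A M x) (subst A M y) w"
    unfolding tmul_def subst_def m_def
    by (intro sum.cong refl) (simp add: sum_product sum.cartesian_product case_prod_unfold min_def)
  finally show "subst A M (tmul x y) w = tmul (subst A M x) (subst A M y) w" .
qed

lemma subst_nonzero:
  assumes "subst A M x w \<noteq> 0"
  shows "\<exists>a. set a \<subseteq> A \<and> length a = length w \<and> x a \<noteq> 0 \<and> word_coeff M a w \<noteq> 0"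
proof (rule ccontr)
  assume "\<not> ?thesis"
  then have "\<forall>a\<in>words A (length w). x a * word_coeff M a w = 0" by (auto simp: words_def)
  then have "(\<Sum>a\<in>words A (length w). x a * word_coeff M a w) = 0" by (intro sum.neutral) auto
  then show False using assms by (simp add: subst_def)
qed

lemma subst_in_tensor_alg:
  assumes A: "finite A" and MA: "\<forall>p\<in>A. \<forall>q. M p q \<noteq> 0 \<longrightarrow> q \<in> A"
    and x: "x \<in> tensor_alg A"
  shows "subst A M x \<in> tensor_alg A"
proof (rule tensor_algI)
  have letters: "set w \<subseteq> A" if nz: "subst A M x w \<noteq> 0" for w
  proof
    fix q assume "q \<in> set w"
    then obtain i where i: "i < length w" "w ! i = q" by (auto simp: in_set_conv_nth)
    obtain a where a: "set a \<subseteq> A" "length a = length w" "x a \<noteq> 0" "word_coeff M a w \<noteq> 0"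
      using subst_nonzero[OF nz] by blast
    have "M (a ! i) (w ! i) \<noteq> 0" using word_coeff_nonzero[OF a(4) a(2) i(1)] .
    moreover have "a ! i \<in> A" using a(1,2) i(1) by auto
    ultimately show "q \<in> A" using MA i(2) by blast
  qed
  have "{w. subst A M x w \<noteq> 0} \<subseteq> (\<Union>a\<in>{a. x a \<noteq> 0}. words A (length a))"
  proof
    fix w assume w: "w \<in> {w. subst A M x w \<noteq> 0}"
    then obtain a where a: "length a = length w" "x a \<noteq> 0" using subst_nonzero by blast
    then show "w \<in> (\<Union>a\<in>{a. x a \<noteq> 0}. words A (length a))" using letters w by (auto simp: words_def)
  qed
  moreover have "finite (\<Union>a\<in>{a. x a \<noteq> 0}. words A (length a))"
    using x A by (auto dest: tensor_algD intro: finite_words)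
  ultimately show "finite {w. subst A M x w \<noteq> 0}" by (rule finite_subset)
  fix w assume "subst A M x w \<noteq> 0" then show "set w \<subseteq> A" by (rule letters)
qed

lemma subst_hom_bideg:
  assumes Ml: "\<forall>p\<in>A. \<forall>q. M p q \<noteq> 0 \<longrightarrow> lev q = lev p"
    and x: "hom_bideg lev m d x"
  shows "hom_bideg lev m d (subst A M x)"
  unfolding hom_bideg_def
proof (intro allI impI)
  fix w assume "subst A M x w \<noteq> 0"
  then obtain a where a: "set a \<subseteq> A" "length a = length w" "x a \<noteq> 0" "word_coeff M a w \<noteq> 0"
    using subst_nonzero by blast
  have "map lev w = map lev a"
  proof (rule nth_equalityI)
    show "length (map lev w) = length (map lev a)" using a by simp
    fix i assume "i < length (map lev w)"
    then have i: "i < length w" by simp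
    have "M (a ! i) (w ! i) \<noteq> 0" using word_coeff_nonzero[OF a(4) a(2) i] .
    moreover have "a ! i \<in> A" using a(1,2) i by auto
    ultimately show "map lev w ! i = map lev a ! i" using Ml i a(2) by auto
  qed
  then show "length w = m \<and> sum_list (map lev w) = d"
    using x a by (auto simp: hom_bideg_def)
qed

lemma subst_identity:
  assumes A: "finite A" and A0: "A0 \<subseteq> A" and M0: "\<forall>p\<in>A0. \<forall>q. M p q = (if p = q then 1 else 0)"
    and x: "\<forall>w. x w \<noteq> 0 \<longrightarrow> set w \<subseteq> A0"
  shows "subst A M x = x"
proof
  fix w
  have "subst A M x w = (\<Sum>a\<in>words A (length w). (if a = w then x a else 0))"
    unfolding subst_def
  proof (intro sum.cong refl)
    fix a assume a: "a \<in> words A (length w)"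
    show "x a * word_coeff M a w = (if a = w then x a else 0)"
    proof (cases "x a = 0")
      case False
      then have "set a \<subseteq> A0" using x by blast
      then have "word_coeff M a w = (if a = w then 1 else 0)" using M0 a by (intro word_coeff_identity) (auto simp: words_def)
      then show ?thesis by simp
    qed auto
  qed
  also have "\<dots> = (if w \<in> words A (length w) then x w else 0)"
    by (rule sum.delta[OF finite_words[OF A]])
  also have "\<dots> = x w" using x A0 by (auto simp: words_def)
  finally show "subst A M x w = x w" .
qed

lemma subst_comp_identity:
  assumes A: "finite A"
    and letters: "\<And>v. v \<in> A \<Longrightarrow> subst A N (subst A M (tmon [v])) = tmon [v]"
    and x: "x \<in> tensor_alg A"
  shows "subst A N (subst A M x) = x"
proof -
  have mon: "subst A N (subst A M (tmon u)) = tmon u" if "set u \<subseteq> A" for u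
    using that
  proof (induction u)
    case Nil then show ?case using A by (simp add: subst_tmon_Nil)
  next
    case (Cons a u)
    then show ?case using A letters by (simp add: tmon_Cons[of a u] subst_tmul)
  qed
  have fin: "finite {u. x u \<noteq> 0}" using x by (rule tensor_algD)
  have "subst A N (subst A M x) = subst A N (subst A M (\<lambda>w. \<Sum>u\<in>{u. x u \<noteq> 0}. x u * tmon u w))"
    using tensor_alg_monomial_expansion[OF x] by simp
  also have "\<dots> = (\<lambda>w. \<Sum>u\<in>{u. x u \<noteq> 0}. x u * subst A N (subst A M (tmon u)) w)"
    using fin by (simp add: subst_sum)
  also have "\<dots> = (\<lambda>w. \<Sum>u\<in>{u. x u \<noteq> 0}. x u * tmon u w)"
    by (intro ext sum.cong refl) (use mon x in \<open>auto dest: tensor_algD\<close>)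
  also have "\<dots> = x" using tensor_alg_monomial_expansion[OF x] by simp
  finally show ?thesis .
qed

lemma Bdeg_single_letter: "x \<in> Bdeg V lev m \<Longrightarrow> single_letter x"
  by (auto simp: Bdeg_def hom_bideg_def single_letter_def)

lemma Bdeg_nonzero:
  assumes "x \<in> Bdeg V lev m" "x w \<noteq> 0"
  obtains q where "w = [q]" "q \<in> V" "lev q = m" "1 \<le> m"
proof -
  have "length w = 1" "sum_list (map lev w) = m" "set w \<subseteq> Vplus V lev"
    using assms by (auto simp: Bdeg_def hom_bideg_def tensor_alg_def)
  then obtain q where "w = [q]" by (auto simp: length_Suc_conv)
  moreover have "q \<in> V" "lev q = m" "1 \<le> m"
    using \<open>w = [q]\<close> \<open>sum_list (map lev w) = m\<close> \<open>set w \<subseteq> Vplus V lev\<close>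
    by (auto simp: Vplus_def)
  ultimately show thesis by (rule that)
qed

lemma tmon_in_Bdeg:
  assumes "q \<in> V" "lev q = m" "1 \<le> m" shows "tmon [q] \<in> Bdeg V lev m"
proof -
  have "tmon [q] \<in> tensor_alg (Vplus V lev)"
    using assms by (intro tmon_in_tensor_alg) (auto simp: Vplus_def)
  then show ?thesis using assms by (auto simp: Bdeg_def hom_bideg_def tmon_def)
qed

lemma Bdeg_expansion:
  assumes x: "x \<in> Bdeg V lev m" and fin: "finite V"
  shows "x = (\<lambda>w. \<Sum>q\<in>lay V lev m. x [q] * tmon [q] w)"
proof
  fix w
  have finl: "finite (lay V lev m)" using fin by (simp add: lay_def)
  show "x w = (\<Sum>q\<in>lay V lev m. x [q] * tmon [q] w)"
  proof (cases "\<exists>q. w = [q] \<and> q \<in> lay V lev m")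
    case True
    then obtain q where q: "w = [q]" "q \<in> lay V lev m" by blast
    have "(\<Sum>q'\<in>lay V lev m. x [q'] * tmon [q'] w) = (\<Sum>q'\<in>lay V lev m. if q' = q then x [q'] else 0)"
      by (intro sum.cong refl) (auto simp: tmon_def q)
    also have "\<dots> = x [q]" using q finl by simp
    finally show ?thesis using q by simp
  next
    case False
    then have "x w = 0" using Bdeg_nonzero[OF x, of w] by (auto simp: lay_def)
    moreover have "(\<Sum>q\<in>lay V lev m. x [q] * tmon [q] w) = 0"
      using False by (intro sum.neutral) (auto simp: tmon_def)
    ultimately show ?thesis by simp
  qed
qed

definition sum_succs :: "('v \<times> 'v) set \<Rightarrow> 'v \<Rightarrow> 'v list \<Rightarrow> 'k::field" where
  "sum_succs E v = (\<lambda>u. case u of [b] \<Rightarrow> if b \<in> succs E v then 1 else 0 | _ \<Rightarrow> 0)"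

definition vertex_relation :: "('v \<times> 'v) set \<Rightarrow> 'v \<Rightarrow> 'v list \<Rightarrow> 'k::field" where
  "vertex_relation E v =
     (\<lambda>u. case u of [a, b] \<Rightarrow> (if a = v \<and> b \<in> succs E v then 1 else 0) | _ \<Rightarrow> 0)"

lemma relB_eq:
  "relB V lev E = {tmon [v, w] |v w. v \<in> Vplus V lev \<and> w \<in> Vplus V lev \<and> (v, w) \<notin> E}
     \<union> {vertex_relation E v |v. v \<in> V \<and> 2 \<le> lev v}"
  by (simp add: relB_def vertex_relation_def)

lemma vertex_relation_eq_tmul: "vertex_relation E v = tmul (tmon [v]) (sum_succs E v)"
proof
  fix w
  have "single_letter (sum_succs E v)"
    by (auto simp: single_letter_def sum_succs_def split: list.splits)
  then have eq: "tmul (tmon [v]) (sum_succs E v) w =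
      (case w of [a, b] \<Rightarrow> tmon [v] [a] * sum_succs E v [b] | _ \<Rightarrow> 0)"
    by (rule tmul_single_letter[OF single_letter_tmon])
  show "vertex_relation E v w = tmul (tmon [v]) (sum_succs E v) w"
    unfolding eq
    by (simp add: vertex_relation_def sum_succs_def tmon_def split: list.splits)
qed

lemma vertex_relation_nonzero:
  "vertex_relation E v w \<noteq> 0 \<Longrightarrow> \<exists>b. w = [v, b] \<and> b \<in> succs E v"
  by (auto simp: vertex_relation_def split: list.splits if_splits)

lemma sum_succs_nonzero: "sum_succs E v w \<noteq> 0 \<Longrightarrow> \<exists>b. w = [b] \<and> b \<in> succs E v"
  by (auto simp: sum_succs_def split: list.splits if_splits)

lemma vertex_relation_in_tensor_alg:
  assumes "finite (succs E v)" "v \<in> B" "succs E v \<subseteq> B"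
  shows "vertex_relation E v \<in> tensor_alg B"
proof (rule tensor_algI)
  have "{w. vertex_relation E v w \<noteq> 0} \<subseteq> (\<lambda>b. [v, b]) ` succs E v"
    using vertex_relation_nonzero by fastforce
  then show "finite {w. vertex_relation E v w \<noteq> 0}"
    using assms(1) by (rule finite_subset[OF _ finite_imageI])
  show "set w \<subseteq> B" if "vertex_relation E v w \<noteq> 0" for w
    using vertex_relation_nonzero[OF that] assms(2,3) by auto
qed

lemma relB_cases:
  assumes "g \<in> relB V lev E"
  obtains (nonedge) v w where "g = tmon [v, w]" "v \<in> Vplus V lev" "w \<in> Vplus V lev" "(v, w) \<notin> E"
  | (vertex) v where "g = vertex_relation E v" "v \<in> V" "2 \<le> lev v"
  using assms unfolding relB_eq by blast

lemma relB_no_short_words: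
  assumes "g \<in> relB V lev E" shows "no_short_words g"
  using assms
proof (cases rule: relB_cases)
  case nonedge
  then show ?thesis by (simp add: no_short_words_def tmon_def)
next
  case vertex
  then show ?thesis by (auto simp: no_short_words_def vertex_relation_def split: list.splits)
qed

section \<open>The restriction \<Gamma>|_n\<close>

locale layered_restriction =
  fixes V :: "'v set" and lev :: "'v \<Rightarrow> nat" and E :: "('v \<times> 'v) set" and n :: nat
  assumes layered: "layered_graph V lev E" and n_ge2: "2 \<le> n"
begin

abbreviation "Vn \<equiv> restrV V lev n"
abbreviation "En \<equiv> restrE V lev E n"
abbreviation "A \<equiv> Vplus Vn lev"
abbreviation "Top \<equiv> lay V lev n"

abbreviation R :: "('v list \<Rightarrow> 'k::field) set" where "R \<equiv> RB V lev E"
abbreviation Rn :: "('v list \<Rightarrow> 'k::field) set" where "Rn \<equiv> RB Vn lev En"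
abbreviation \<kappa> :: "('v list \<Rightarrow> 'k::field) \<Rightarrow> ('v list \<Rightarrow> 'k) set" where
  "\<kappa> a \<equiv> kappa V lev E n a"

lemma finite_V: "finite V"
  using layered by (simp add: layered_graph_def)

lemma finite_A: "finite A"
  using finite_V by (simp add: Vplus_def restrV_def)

lemma finite_Top: "finite Top"
  using finite_V by (simp add: lay_def)

lemma mem_A_iff: "q \<in> A \<longleftrightarrow> q \<in> V \<and> 1 \<le> lev q \<and> lev q \<le> n"
  by (auto simp: Vplus_def restrV_def)

lemma mem_Top_iff: "q \<in> Top \<longleftrightarrow> q \<in> V \<and> lev q = n"
  by (auto simp: lay_def)

lemma Top_subset_A: "q \<in> Top \<Longrightarrow> q \<in> A"
  using n_ge2 by (auto simp: mem_A_iff mem_Top_iff)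

lemma A_subset_Vplus: "A \<subseteq> Vplus V lev"
  by (auto simp: Vplus_def restrV_def)

lemma edge_lev: "(v, w) \<in> E \<Longrightarrow> 1 \<le> lev v \<and> lev w = lev v - 1"
  using layered by (auto simp: layered_graph_def)

lemma succs_lev: "w \<in> succs E v \<Longrightarrow> w \<in> V \<and> lev w = lev v - 1 \<and> 1 \<le> lev v"
  using layered by (auto simp: succs_def layered_graph_def)

lemma finite_succs: "finite (succs E v)"
  using finite_V succs_lev by (blast intro: finite_subset)

lemma succs_En: "v \<in> Vn \<Longrightarrow> succs En v = succs E v"
  using succs_lev by (auto simp: succs_def restrE_def restrV_def)

lemma vertex_relation_En: "v \<in> Vn \<Longrightarrow> vertex_relation En v = vertex_relation E v"
  unfolding vertex_relation_def by (drule succs_En) simp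

lemma relB_in_tensor_alg: "relB V lev E \<subseteq> tensor_alg (Vplus V lev)"
proof
  fix g :: "'v list \<Rightarrow> 'k::field" assume "g \<in> relB V lev E"
  then show "g \<in> tensor_alg (Vplus V lev)"
  proof (cases rule: relB_cases)
    case (vertex v)
    have "succs E v \<subseteq> Vplus V lev" using vertex succs_lev by (auto simp: Vplus_def)
    moreover have "v \<in> Vplus V lev" using vertex by (simp add: Vplus_def)
    ultimately show ?thesis
      unfolding vertex(1) by (intro vertex_relation_in_tensor_alg finite_succs)
  qed (simp add: tmon_in_tensor_alg)
qed

lemma relB_restr_cases:
  assumes "g \<in> relB Vn lev En"
  obtains (nonedge) v w where "g = tmon [v, w]" "v \<in> A" "w \<in> A" "(v, w) \<notin> E"
  | (vertex) v where "g = vertex_relation E v" "v \<in> V" "2 \<le> lev v" "lev v \<le> n"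
  using assms
proof (cases rule: relB_cases)
  case a: (nonedge v w)
  have "v \<in> Vn" "w \<in> Vn" using a(2,3) by (simp_all add: Vplus_def)
  then have "(v, w) \<notin> E" using a(4) by (simp add: restrE_def)
  then show thesis by (rule nonedge[OF a(1-3)])
next
  case b: (vertex v)
  have "v \<in> V" "lev v \<le> n" using b(2) by (simp_all add: restrV_def)
  then show thesis using b(1,3) vertex_relation_En[OF b(2)] by (intro vertex) simp_all
qed

lemma nonedge_in_relB_restr:
  assumes "v \<in> A" "w \<in> A" "(v, w) \<notin> E" shows "tmon [v, w] \<in> relB Vn lev En"
proof -
  have "(v, w) \<notin> En" using assms(3) by (simp add: restrE_def)
  then show ?thesis using assms(1,2) unfolding relB_eq by blast
qed

lemma vertex_relation_in_relB_restr:
  assumes "v \<in> V" "2 \<le> lev v" "lev v \<le> n"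
  shows "(vertex_relation E v :: 'v list \<Rightarrow> 'k::field) \<in> relB Vn lev En"
proof -
  have vVn: "v \<in> Vn" using assms by (simp add: restrV_def)
  have "(vertex_relation En v :: 'v list \<Rightarrow> 'k) \<in> relB Vn lev En"
    unfolding relB_eq by (intro UnI2 CollectI exI[of _ v]) (simp add: vVn assms(2))
  then show ?thesis by (simp only: vertex_relation_En[OF vVn])
qed

lemma relB_restr_subset: "relB Vn lev En \<subseteq> relB V lev E"
proof
  fix g :: "'v list \<Rightarrow> 'k::field" assume "g \<in> relB Vn lev En"
  then show "g \<in> relB V lev E"
  proof (cases rule: relB_restr_cases)
    case nonedge
    then show ?thesis using A_subset_Vplus unfolding relB_eq by blast
  next
    case vertex
    then show ?thesis unfolding relB_eq by blast
  qed
qed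

lemma relB_restr_in_tensor_alg: "relB Vn lev En \<subseteq> tensor_alg A"
proof
  fix g :: "'v list \<Rightarrow> 'k::field" assume "g \<in> relB Vn lev En"
  then show "g \<in> tensor_alg A"
  proof (cases rule: relB_restr_cases)
    case (vertex v)
    have "succs E v \<subseteq> A" using vertex succs_lev by (auto simp: mem_A_iff)
    moreover have "v \<in> A" using vertex by (simp add: mem_A_iff)
    ultimately show ?thesis
      unfolding vertex(1) by (intro vertex_relation_in_tensor_alg finite_succs)
  qed (simp add: tmon_in_tensor_alg)
qed

lemma RB_ideal: "is_two_sided_ideal (Vplus V lev) R"
  unfolding RB_def by (rule ideal_gen_ideal[OF relB_in_tensor_alg])

lemma RBn_ideal: "is_two_sided_ideal A Rn"
  unfolding RB_def by (rule ideal_gen_ideal[OF relB_restr_in_tensor_alg])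

lemma relB_in_RB: "relB V lev E \<subseteq> R"
  unfolding RB_def by (rule ideal_gen_base)

lemma relB_restr_in_RBn: "relB Vn lev En \<subseteq> Rn"
  unfolding RB_def by (rule ideal_gen_base)

lemma RBn_subset_RB: "(Rn :: ('v list \<Rightarrow> 'k::field) set) \<subseteq> R"
proof -
  let ?J = "(R :: ('v list \<Rightarrow> 'k) set) \<inter> tensor_alg A"
  have "is_two_sided_ideal A ?J"
    by (rule ideal_inter_subalg[OF RB_ideal A_subset_Vplus])
  moreover have "relB Vn lev En \<subseteq> ?J"
    using relB_restr_subset relB_in_RB relB_restr_in_tensor_alg by blast
  ultimately have "ideal_gen A (relB Vn lev En) \<subseteq> ?J"
    by (rule ideal_gen_min)
  then show ?thesis by (simp add: RB_def[of Vn])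
qed

definition top_words :: "'v list set" where
  "top_words = {[a, b] |a b. a \<in> Top \<and> b \<in> A}"

lemma relB_restrict_top_words:
  assumes "g \<in> relB V lev E"
  shows "restrict_words top_words g \<in> Rn"
  using assms
proof (cases rule: relB_cases)
  case (nonedge v w)
  show ?thesis
  proof (cases "[v, w] \<in> top_words")
    case True
    then have "v \<in> A" "w \<in> A" using Top_subset_A by (auto simp: top_words_def)
    then have "g \<in> relB Vn lev En" using nonedge(1,4) by (simp add: nonedge_in_relB_restr)
    then show ?thesis using relB_restr_in_RBn True nonedge(1) by (auto simp: restrict_words_tmon)
  next
    case False
    then show ?thesis using nonedge(1) ideal_tzero[OF RBn_ideal] by (simp add: restrict_words_tmon)
  qed
next
  case (vertex v)
  show ?thesis
  proof (cases "lev v = n")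
    case True
    have "restrict_words top_words g = g"
    proof (rule restrict_words_all)
      fix u assume "g u \<noteq> 0"
      then obtain c where "u = [v, c]" "c \<in> succs E v"
        using vertex(1) vertex_relation_nonzero by metis
      then show "u \<in> top_words" using succs_lev[of c v] vertex True n_ge2
        by (auto simp: top_words_def mem_Top_iff mem_A_iff)
    qed
    moreover have "g \<in> relB Vn lev En"
      using vertex True by (simp add: vertex_relation_in_relB_restr)
    ultimately show ?thesis using relB_restr_in_RBn by auto
  next
    case False
    have "restrict_words top_words g = tzero"
    proof (rule restrict_words_none)
      fix u assume "g u \<noteq> 0"
      then obtain c where "u = [v, c]" using vertex(1) vertex_relation_nonzero by metis
      then show "u \<notin> top_words" using False by (auto simp: top_words_def mem_Top_iff)
    qed
    then show ?thesis using ideal_tzero[OF RBn_ideal] by simp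
  qed
qed

lemma RB_restrict_top_words:
  assumes "x \<in> R" shows "no_short_words x \<and> restrict_words top_words x \<in> Rn"
proof (rule ideal_gen_restrict_length2[OF relB_in_tensor_alg _ RBn_ideal])
  show "\<forall>w\<in>top_words. length w = 2" by (auto simp: top_words_def)
  show "x \<in> ideal_gen (Vplus V lev) (relB V lev E)" using assms by (simp add: RB_def)
qed (auto intro: relB_no_short_words relB_restrict_top_words)

lemma RB_no_short_words: "x \<in> R \<Longrightarrow> no_short_words x"
  using RB_restrict_top_words by blast

lemma RBn_no_short_words: "x \<in> Rn \<Longrightarrow> no_short_words x"
  using RBn_subset_RB RB_no_short_words by blast

lemma RB_in_RBn_if_top_words:
  assumes "x \<in> R" "\<And>w. x w \<noteq> 0 \<Longrightarrow> w \<in> top_words"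
  shows "x \<in> Rn"
proof -
  have "restrict_words top_words x = x" by (rule restrict_words_all) (rule assms(2))
  then show ?thesis using RB_restrict_top_words[OF assms(1)] by simp
qed

lemma relB_restrict_first_letter:
  assumes "g \<in> relB V lev E"
  shows "restrict_words {w. length w = 2 \<and> hd w = q} g \<in> R"
proof -
  have "g \<in> R" using assms relB_in_RB by blast
  moreover obtain v where "\<And>w. g w \<noteq> 0 \<Longrightarrow> length w = 2 \<and> hd w = v"
    using assms
  proof (cases rule: relB_cases)
    case (nonedge v w)
    then show thesis by (intro that[of v]) (auto simp: tmon_def split: if_splits)
  next
    case (vertex v)
    then show thesis by (intro that[of v]) (auto dest!: vertex_relation_nonzero)
  qed
  ultimately show ?thesis
    using ideal_tzero[OF RB_ideal] restrict_words_all[of g] restrict_words_none[of g]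
    by (cases "v = q") auto
qed

lemma RB_restrict_first_letter:
  assumes "x \<in> R" shows "restrict_words {w. length w = 2 \<and> hd w = q} x \<in> R"
proof -
  have "no_short_words x \<and> restrict_words {w. length w = 2 \<and> hd w = q} x \<in> R"
  proof (rule ideal_gen_restrict_length2[OF relB_in_tensor_alg _ RB_ideal])
    show "x \<in> ideal_gen (Vplus V lev) (relB V lev E)" using assms by (simp add: RB_def)
  qed (auto intro: relB_no_short_words relB_restrict_first_letter)
  then show ?thesis by blast
qed

lemma Bdeg_in_tensor_alg_A:
  assumes "m \<le> n" "x \<in> Bdeg V lev m" shows "x \<in> tensor_alg A"
proof (rule tensor_algI)
  show "finite {w. x w \<noteq> 0}" using assms(2) by (simp add: Bdeg_def tensor_alg_def)
  show "set w \<subseteq> A" if "x w \<noteq> 0" for w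
    by (rule Bdeg_nonzero[OF assms(2) that]) (use assms(1) in \<open>auto simp: mem_A_iff\<close>)
qed

lemma Bdeg_eq_if_cong:
  assumes "l \<in> Bdeg V lev m" "l' \<in> Bdeg V lev m" "tsub l l' \<in> Rn"
  shows "l = l'"
proof
  fix w
  show "l w = l' w"
  proof (cases "length w \<le> 1")
    case True
    then show ?thesis using RBn_no_short_words[OF assms(3)] by (simp add: no_short_words_def tsub_def)
  next
    case False
    then have "l w = 0" "l' w = 0"
      using assms(1,2)[THEN Bdeg_single_letter] unfolding single_letter_def by fastforce+
    then show ?thesis by simp
  qed
qed

lemma tmul_Bdeg_in_RB_iff:
  assumes a: "a \<in> Bdeg V lev n" and b: "b \<in> Bdeg V lev (n - 1)"
  shows "tmul a b \<in> R \<longleftrightarrow> tmul a b \<in> Rn"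
proof
  assume "tmul a b \<in> R"
  then show "tmul a b \<in> Rn"
  proof (rule RB_in_RBn_if_top_words)
    fix w assume "tmul a b w \<noteq> 0"
    then obtain p q where w: "w = [p, q]" "a [p] \<noteq> 0" "b [q] \<noteq> 0"
      using tmul_single_letter[OF a[THEN Bdeg_single_letter] b[THEN Bdeg_single_letter], of w]
      by (auto split: list.splits)
    obtain p' where "[p] = [p']" "p' \<in> V" "lev p' = n" by (rule Bdeg_nonzero[OF a w(2)])
    moreover obtain q' where "[q] = [q']" "q' \<in> V" "lev q' = n - 1" "1 \<le> n - 1"
      by (rule Bdeg_nonzero[OF b w(3)])
    ultimately show "w \<in> top_words" using w(1) by (auto simp: top_words_def mem_Top_iff mem_A_iff)
  qed
qed (use RBn_subset_RB in blast)

lemma kappa_eq_RBn: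
  "a \<in> Bdeg V lev n \<Longrightarrow> \<kappa> a = {b \<in> Bdeg V lev (n - 1). tmul a b \<in> Rn}"
  by (auto simp: kappa_def tmul_Bdeg_in_RB_iff)

lemma sum_succs_in_Bdeg:
  assumes "v \<in> V" "2 \<le> lev v" shows "sum_succs E v \<in> Bdeg V lev (lev v - 1)"
proof -
  have support: "u = [c] \<and> c \<in> Vplus V lev \<and> lev c = lev v - 1"
    if "u = [c]" "c \<in> succs E v" for u c
    using that succs_lev[of c v] assms by (simp add: Vplus_def)
  have "{u. sum_succs E v u \<noteq> 0} \<subseteq> (\<lambda>c. [c]) ` succs E v"
    by (auto dest!: sum_succs_nonzero)
  then have "finite {u. sum_succs E v u \<noteq> 0}"
    using finite_succs by (rule finite_subset[OF _ finite_imageI])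
  then show ?thesis
    unfolding Bdeg_def hom_bideg_def tensor_alg_def
    using support by (auto dest!: sum_succs_nonzero)
qed

lemma RBn_if_nonedge_support:
  assumes x: "x \<in> tensor_alg A" and nonedge: "\<And>w. x w \<noteq> 0 \<Longrightarrow> \<exists>p q. w = [p, q] \<and> (p, q) \<notin> E"
  shows "x \<in> Rn"
proof -
  have "tscale (x u) (tmon u) \<in> Rn" if u: "x u \<noteq> 0" for u
  proof -
    obtain p q where pq: "u = [p, q]" "(p, q) \<notin> E" using nonedge[OF u] by blast
    have "p \<in> A" "q \<in> A" using tensor_algD(2)[OF x u] pq(1) by auto
    then have "tmon u \<in> relB Vn lev En" using pq by (simp add: nonedge_in_relB_restr)
    then show ?thesis using relB_restr_in_RBn ideal_tscale[OF RBn_ideal] by blast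
  qed
  then have "(\<lambda>w. \<Sum>u\<in>{u. x u \<noteq> 0}. tscale (x u) (tmon u) w) \<in> Rn"
    by (intro ideal_sum[OF RBn_ideal] tensor_algD(1)[OF x]) simp
  then show ?thesis
    using tensor_alg_monomial_expansion[OF x] by (simp add: tscale_def)
qed

text \<open>The kernel condition on the top rows is what makes the substitution respect the relations
  v\<Sigma>S(v) and vw (|v| = n) of B(\<Gamma>|_n).\<close>
definition admissible :: "('v \<Rightarrow> 'v \<Rightarrow> 'k::field) \<Rightarrow> bool" where
  "admissible M \<longleftrightarrow>
     (\<forall>p\<in>A. \<forall>q. M p q \<noteq> 0 \<longrightarrow> q \<in> A \<and> lev q = lev p) \<and>
     (\<forall>p\<in>A. lev p \<noteq> n \<longrightarrow> (\<forall>q. M p q = (if p = q then 1 else 0))) \<and>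
     (\<forall>p\<in>Top. \<forall>q. M p q \<noteq> 0 \<longrightarrow> \<kappa> (tmon [p] :: 'v list \<Rightarrow> 'k) \<subseteq> \<kappa> (tmon [q]))"

context
  fixes M :: "'v \<Rightarrow> 'v \<Rightarrow> 'k::field"
  assumes M: "admissible M"
begin

lemma admissible_target: "p \<in> A \<Longrightarrow> M p q \<noteq> 0 \<Longrightarrow> q \<in> A \<and> lev q = lev p"
  using M unfolding admissible_def by metis

lemma admissible_lower: "p \<in> A \<Longrightarrow> lev p \<noteq> n \<Longrightarrow> M p q = (if p = q then 1 else 0)"
  using M unfolding admissible_def by metis

lemma admissible_kappa: "p \<in> Top \<Longrightarrow> M p q \<noteq> 0 \<Longrightarrow> \<kappa> (tmon [p] :: 'v list \<Rightarrow> 'k) \<subseteq> \<kappa> (tmon [q])"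
  using M unfolding admissible_def by metis

lemma subst_admissible_in_tensor_alg: "x \<in> tensor_alg A \<Longrightarrow> subst A M x \<in> tensor_alg A"
  by (rule subst_in_tensor_alg[OF finite_A]) (use admissible_target in blast)

lemma subst_letter_single_letter: "p \<in> A \<Longrightarrow> single_letter (subst A M (tmon [p]))"
  by (auto simp: subst_tmon_single[OF finite_A] single_letter_def split: list.splits)

lemma subst_lower_word:
  assumes "\<And>w. y w \<noteq> 0 \<Longrightarrow> set w \<subseteq> A - Top"
  shows "subst A M y = y"
proof (rule subst_identity[OF finite_A])
  show "A - Top \<subseteq> A" by blast
  show "\<forall>p\<in>A - Top. \<forall>q. M p q = (if p = q then 1 else 0)"
    using admissible_lower by (auto simp: mem_Top_iff mem_A_iff)
qed (use assms in blast)

lemma subst_lower_letter: "p \<in> A \<Longrightarrow> lev p \<noteq> n \<Longrightarrow> subst A M (tmon [p]) = tmon [p]"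
  by (rule subst_lower_word) (auto simp: tmon_def mem_Top_iff split: if_splits)

lemma subst_top_letter:
  assumes p: "p \<in> Top" shows "subst A M (tmon [p]) = (\<lambda>w. \<Sum>q\<in>Top. M p q * tmon [q] w)"
proof
  fix w
  have pA: "p \<in> A" using p by (rule Top_subset_A)
  show "subst A M (tmon [p]) w = (\<Sum>q\<in>Top. M p q * tmon [q] w)"
  proof (cases "\<exists>q. w = [q]")
    case True
    then obtain q where w: "w = [q]" by blast
    have "M p q = 0" if "q \<notin> Top"
      using admissible_target[OF pA, of q] p that by (auto simp: mem_A_iff mem_Top_iff)
    then have "(\<Sum>q'\<in>Top. M p q' * tmon [q'] w) = M p q"
      using finite_Top by (simp add: w tmon_def if_distrib cong: if_cong)
    then show ?thesis by (simp add: subst_tmon_single[OF finite_A pA] w)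
  next
    case False
    then have "(\<Sum>q\<in>Top. M p q * tmon [q] w) = 0" by (intro sum.neutral) (auto simp: tmon_def)
    then show ?thesis using False by (auto simp: subst_tmon_single[OF finite_A pA] split: list.splits)
  qed
qed

lemma tmul_subst_top_letter_in_RBn:
  assumes p: "p \<in> Top" and b: "b \<in> \<kappa> (tmon [p] :: 'v list \<Rightarrow> 'k)"
  shows "tmul (subst A M (tmon [p])) b \<in> Rn"
proof -
  have "tscale (M p q) (tmul (tmon [q]) b) \<in> Rn" if q: "q \<in> Top" for q
  proof (cases "M p q = 0")
    case True
    then show ?thesis using ideal_tzero[OF RBn_ideal] by (simp add: tscale_def tzero_def)
  next
    case False
    then have "b \<in> \<kappa> (tmon [q])" using admissible_kappa[OF p False] b by blast
    moreover have "tmon [q] \<in> Bdeg V lev n"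
      using q n_ge2 by (intro tmon_in_Bdeg) (auto simp: mem_Top_iff)
    ultimately have "tmul (tmon [q]) b \<in> Rn" using kappa_eq_RBn by blast
    then show ?thesis by (rule ideal_tscale[OF RBn_ideal])
  qed
  then have "(\<lambda>w. \<Sum>q\<in>Top. tscale (M p q) (tmul (tmon [q]) b) w) \<in> Rn"
    by (rule ideal_sum[OF RBn_ideal finite_Top])
  then show ?thesis
    unfolding subst_top_letter[OF p] tmul_sum_left[OF finite_Top] by (simp add: tscale_def)
qed

lemma subst_tmon_pair: "subst A M (tmon [v, w]) = tmul (subst A M (tmon [v])) (subst A M (tmon [w]))"
  by (simp add: tmon_Cons[of v "[w]"] subst_tmul[OF finite_A])

lemma subst_non_adjacent_levels_in_RBn:
  assumes v: "v \<in> A" and w: "w \<in> A" and levels: "lev w \<noteq> lev v - 1"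
  shows "subst A M (tmon [v, w]) \<in> Rn"
proof (rule RBn_if_nonedge_support)
  show "subst A M (tmon [v, w]) \<in> tensor_alg A"
    using v w by (intro subst_admissible_in_tensor_alg tmon_in_tensor_alg) simp
  fix u assume "subst A M (tmon [v, w]) u \<noteq> 0"
  then obtain p q where u: "u = [p, q]" "M v p \<noteq> 0" "M w q \<noteq> 0"
    unfolding subst_tmon_pair tmul_single_letter[OF subst_letter_single_letter[OF v]
        subst_letter_single_letter[OF w]]
    by (auto simp: subst_tmon_single[OF finite_A] v w split: list.splits)
  have "lev p = lev v" "lev q = lev w" using admissible_target v w u by auto
  then show "\<exists>p q. u = [p, q] \<and> (p, q) \<notin> E" using levels u(1) edge_lev by auto
qed

lemma subst_nonedge_in_RBn:
  assumes v: "v \<in> A" and w: "w \<in> A" and nonedge: "(v, w) \<notin> E"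
  shows "subst A M (tmon [v, w]) \<in> Rn"
proof (cases "lev w = lev v - 1")
  case False
  then show ?thesis by (rule subst_non_adjacent_levels_in_RBn[OF v w])
next
  case levels: True
  show ?thesis
  proof (cases "lev v = n")
    case True
    have vTop: "v \<in> Top" and wB: "tmon [w] \<in> Bdeg V lev (n - 1)"
      using v w True levels n_ge2 by (auto simp: mem_A_iff mem_Top_iff intro!: tmon_in_Bdeg)
    have "subst A M (tmon [w]) = tmon [w]"
      using w levels True n_ge2 by (intro subst_lower_letter) auto
    moreover have "tmon [v, w] \<in> R"
      using v w nonedge A_subset_Vplus relB_in_RB unfolding relB_eq by blast
    then have "tmon [w] \<in> \<kappa> (tmon [v] :: 'v list \<Rightarrow> 'k)"
      using wB by (simp add: kappa_def tmul_tmon)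
    ultimately show ?thesis
      unfolding subst_tmon_pair using tmul_subst_top_letter_in_RBn[OF vTop] by simp
  next
    case False
    have "lev w \<noteq> n" using levels v by (auto simp: mem_A_iff)
    then have "subst A M (tmon [v, w]) = tmon [v, w]"
      using v w False by (simp add: subst_tmon_pair subst_lower_letter tmul_tmon)
    moreover have "tmon [v, w] \<in> relB Vn lev En" by (rule nonedge_in_relB_restr[OF v w nonedge])
    ultimately show ?thesis using relB_restr_in_RBn by auto
  qed
qed

lemma subst_vertex_relation_in_RBn:
  assumes v: "v \<in> V" "2 \<le> lev v" "lev v \<le> n"
  shows "subst A M (vertex_relation E v) \<in> Rn"
proof -
  have rel: "(vertex_relation E v :: 'v list \<Rightarrow> 'k) \<in> relB Vn lev En"
    by (rule vertex_relation_in_relB_restr[OF v])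
  show ?thesis
  proof (cases "lev v = n")
    case True
    have lower_succs: "set u \<subseteq> A - Top" if nonzero: "sum_succs E v u \<noteq> (0::'k)" for u
    proof -
      obtain c where "u = [c]" "c \<in> succs E v" using sum_succs_nonzero[OF nonzero] by blast
      then show ?thesis using succs_lev[of c v] v by (auto simp: mem_A_iff mem_Top_iff)
    qed
    have "subst A M (sum_succs E v) = sum_succs E v" by (rule subst_lower_word) (rule lower_succs)
    then have "subst A M (vertex_relation E v) = tmul (subst A M (tmon [v])) (sum_succs E v)"
      by (simp add: vertex_relation_eq_tmul subst_tmul[OF finite_A])
    moreover have "vertex_relation E v \<in> (R :: ('v list \<Rightarrow> 'k) set)"
      using rel relB_restr_subset relB_in_RB by blast
    then have "sum_succs E v \<in> \<kappa> (tmon [v] :: 'v list \<Rightarrow> 'k)"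
      using sum_succs_in_Bdeg[OF v(1,2)] True by (simp add: kappa_def vertex_relation_eq_tmul)
    moreover have "v \<in> Top" using v(1) True by (simp add: mem_Top_iff)
    ultimately show ?thesis using tmul_subst_top_letter_in_RBn by simp
  next
    case False
    have "subst A M (vertex_relation E v) = vertex_relation E v"
    proof (rule subst_lower_word)
      fix u assume nonzero: "vertex_relation E v u \<noteq> (0::'k)"
      obtain c where "u = [v, c]" "c \<in> succs E v" using vertex_relation_nonzero[OF nonzero] by blast
      then show "set u \<subseteq> A - Top"
        using succs_lev[of c v] v False by (auto simp: mem_A_iff mem_Top_iff)
    qed
    moreover have "(vertex_relation E v :: 'v list \<Rightarrow> 'k) \<in> Rn" using rel relB_restr_in_RBn by blast
    ultimately show ?thesis by simp
  qed
qed

lemma subst_admissible_Bdeg: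
  assumes "m \<le> n" "x \<in> Bdeg V lev m" shows "subst A M x \<in> Bdeg V lev m"
proof -
  have "subst A M x \<in> tensor_alg A"
    by (rule subst_admissible_in_tensor_alg[OF Bdeg_in_tensor_alg_A[OF assms]])
  moreover have "hom_bideg lev 1 m (subst A M x)"
    using assms(2) admissible_target by (intro subst_hom_bideg) (auto simp: Bdeg_def)
  ultimately show ?thesis using tensor_alg_mono[OF A_subset_Vplus] by (auto simp: Bdeg_def)
qed

lemma subst_RBn:
  assumes x: "x \<in> Rn" shows "subst A M x \<in> Rn"
proof -
  let ?J = "{x \<in> tensor_alg A. subst A M x \<in> Rn}"
  have "is_two_sided_ideal A ?J"
    by (rule ideal_preimage[OF RBn_ideal subst_admissible_in_tensor_alg])
      (simp_all add: subst_tzero subst_tadd subst_tscale subst_tmul[OF finite_A])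
  moreover have "relB Vn lev En \<subseteq> ?J"
  proof
    fix g :: "'v list \<Rightarrow> 'k" assume g: "g \<in> relB Vn lev En"
    then have "g \<in> tensor_alg A" using relB_restr_in_tensor_alg by blast
    moreover from g have "subst A M g \<in> Rn"
    proof (cases rule: relB_restr_cases)
      case (nonedge v w)
      then show ?thesis using subst_nonedge_in_RBn by simp
    next
      case (vertex v)
      then show ?thesis using subst_vertex_relation_in_RBn by simp
    qed
    ultimately show "g \<in> ?J" by blast
  qed
  ultimately have "ideal_gen A (relB Vn lev En) \<subseteq> ?J" by (rule ideal_gen_min)
  moreover have "x \<in> ideal_gen A (relB Vn lev En)" using x by (simp add: RB_def)
  ultimately show ?thesis by blast
qed

end

lemma subst_graded_alg_aut:
  fixes M N :: "'v \<Rightarrow> 'v \<Rightarrow> 'k::field"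
  assumes M: "admissible M" and N: "admissible N"
    and NM: "\<And>x. x \<in> tensor_alg A \<Longrightarrow> subst A N (subst A M x) = x"
    and MN: "\<And>x. x \<in> tensor_alg A \<Longrightarrow> subst A M (subst A N x) = x"
  shows "graded_alg_aut A lev Rn (subst A M)"
  unfolding graded_alg_aut_def
proof (intro conjI ballI allI impI)
  note cong_refl = ideal_cong_refl[OF RBn_ideal]
  fix x :: "'v list \<Rightarrow> 'k" assume x: "x \<in> tensor_alg A"
  show "subst A M x \<in> tensor_alg A" by (rule subst_admissible_in_tensor_alg[OF M x])
  show "\<exists>y\<in>tensor_alg A. hom_bideg lev m d y \<and> tsub (subst A M x) y \<in> Rn"
    if "hom_bideg lev m d x" for m d
    using subst_hom_bideg[OF _ that] admissible_target[OF M] cong_refl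
      subst_admissible_in_tensor_alg[OF M x] by blast
  show "tsub (subst A M (tscale c x)) (tscale c (subst A M x)) \<in> Rn" for c
    by (simp add: subst_tscale cong_refl)
  show "\<exists>x\<in>tensor_alg A. tsub (subst A M x) x' \<in> Rn" if "x' \<in> tensor_alg A" for x'
    using subst_admissible_in_tensor_alg[OF N that] MN[OF that] cong_refl by metis
  fix y :: "'v list \<Rightarrow> 'k" assume y: "y \<in> tensor_alg A"
  show "tsub (subst A M (tadd x y)) (tadd (subst A M x) (subst A M y)) \<in> Rn"
    by (simp add: subst_tadd cong_refl)
  show "tsub (subst A M (tmul x y)) (tmul (subst A M x) (subst A M y)) \<in> Rn"
    by (simp add: subst_tmul[OF finite_A] cong_refl)
  show "tsub (subst A M x) (subst A M y) \<in> Rn" if "tsub x y \<in> Rn"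
    using subst_RBn[OF M that] by (simp add: subst_tsub)
  show "tsub x y \<in> Rn" if "tsub (subst A M x) (subst A M y) \<in> Rn"
    using subst_RBn[OF N, of "subst A M (tsub x y)"] that NM[OF tsub_in_tensor_alg[OF x y]]
    by (simp add: subst_tsub)
next
  show "tsub (subst A M (tmon [])) (tmon []) \<in> (Rn :: ('v list \<Rightarrow> 'k) set)"
    by (simp add: subst_tmon_Nil[OF finite_A] ideal_cong_refl[OF RBn_ideal])
qed

text \<open>A coefficient of a \<in> B_n at a vertex q can be isolated in ab by keeping only the words
  starting with q, and this restriction preserves R_B.\<close>
lemma kappa_subset_kappa_letter:
  assumes a: "a \<in> Bdeg V lev n" and q: "a [q] \<noteq> 0"
  shows "\<kappa> a \<subseteq> \<kappa> (tmon [q])"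
proof
  fix b assume "b \<in> \<kappa> a"
  then have b: "b \<in> Bdeg V lev (n - 1)" and ab: "tmul a b \<in> R" by (auto simp: kappa_def)
  let ?S = "{w. length w = 2 \<and> hd w = q}"
  have "restrict_words ?S (tmul a b) \<in> R" by (rule RB_restrict_first_letter[OF ab])
  moreover have "restrict_words ?S (tmul a b) = tscale (a [q]) (tmul (tmon [q]) b)"
  proof
    fix w
    have "tmul a b w = (case w of [x, y] \<Rightarrow> a [x] * b [y] | _ \<Rightarrow> 0)"
      by (rule tmul_single_letter[OF a[THEN Bdeg_single_letter] b[THEN Bdeg_single_letter]])
    moreover have "tmul (tmon [q]) b w = (case w of [x, y] \<Rightarrow> tmon [q] [x] * b [y] | _ \<Rightarrow> 0)"
      by (rule tmul_single_letter[OF single_letter_tmon b[THEN Bdeg_single_letter]])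
    ultimately show "restrict_words ?S (tmul a b) w = tscale (a [q]) (tmul (tmon [q]) b) w"
      by (auto simp: restrict_words_def tscale_def tmon_def split: list.splits)
  qed
  ultimately have "tscale (a [q]) (tmul (tmon [q]) b) \<in> R" by simp
  then have "tmul (tmon [q]) b \<in> R" using ideal_tscale_cancel[OF RB_ideal] q by blast
  then show "b \<in> \<kappa> (tmon [q])" using b by (simp add: kappa_def)
qed

definition top_matrix :: "('v \<Rightarrow> 'v \<Rightarrow> 'k::field) \<Rightarrow> 'v \<Rightarrow> 'v \<Rightarrow> 'k" where
  "top_matrix F p q = (if p \<in> Top then F p q else if p = q then 1 else 0)"

lemma top_matrix_admissible:
  fixes F :: "'v \<Rightarrow> 'v \<Rightarrow> 'k::field"
  assumes F: "\<And>p q. p \<in> Top \<Longrightarrow> F p q \<noteq> 0 \<Longrightarrow> q \<in> Top \<and> \<kappa> (tmon [p] :: 'v list \<Rightarrow> 'k) \<subseteq> \<kappa> (tmon [q])"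
  shows "admissible (top_matrix F)"
  unfolding admissible_def
proof (intro conjI ballI allI impI)
  fix p q assume p: "p \<in> A" and nz: "top_matrix F p q \<noteq> 0"
  show "q \<in> A" "lev q = lev p"
    using F[of p q] nz p Top_subset_A by (auto simp: top_matrix_def mem_Top_iff split: if_splits)
next
  fix p q assume "p \<in> A" "lev p \<noteq> n"
  then show "top_matrix F p q = (if p = q then 1 else 0)" by (simp add: top_matrix_def mem_Top_iff)
next
  fix p q assume "p \<in> Top" "top_matrix F p q \<noteq> 0"
  then show "\<kappa> (tmon [p] :: 'v list \<Rightarrow> 'k) \<subseteq> \<kappa> (tmon [q])"
    using F by (simp add: top_matrix_def)
qed

lemma subst_top_matrix_top_letter:
  fixes F :: "'v \<Rightarrow> 'v \<Rightarrow> 'k::field"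
  assumes "p \<in> Top" "\<And>q. F p q \<noteq> 0 \<Longrightarrow> q \<in> Top"
  shows "subst A (top_matrix F) (tmon [p]) = (\<lambda>w. \<Sum>q\<in>Top. F p q * tmon [q] w)"
proof
  fix w
  have "subst A (top_matrix F) (tmon [p]) w = (case w of [q] \<Rightarrow> F p q | _ \<Rightarrow> 0)"
    using assms(1) by (simp add: subst_tmon_single[OF finite_A Top_subset_A] top_matrix_def
        split: list.split)
  moreover have "(\<Sum>q\<in>Top. F p q * tmon [q] w) = (case w of [q] \<Rightarrow> F p q | _ \<Rightarrow> 0)"
  proof (cases "\<exists>q. w = [q]")
    case True
    then obtain q where w: "w = [q]" by blast
    have "(\<Sum>q'\<in>Top. F p q' * tmon [q'] w) = (if q \<in> Top then F p q else 0)"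
      using finite_Top by (simp add: w tmon_def if_distrib cong: if_cong)
    then show ?thesis using assms(2)[of q] w by auto
  next
    case False
    then show ?thesis by (auto simp: tmon_def intro!: sum.neutral split: list.splits)
  qed
  ultimately show "subst A (top_matrix F) (tmon [p]) w = (\<Sum>q\<in>Top. F p q * tmon [q] w)" by simp
qed

lemma subst_top_matrix_lower_letter:
  assumes "p \<in> A" "p \<notin> Top" shows "subst A (top_matrix F) (tmon [p]) = tmon [p]"
  unfolding subst_tmon_single[OF finite_A assms(1)]
  using assms(2) by (simp add: top_matrix_def tmon_def fun_eq_iff split: list.splits)

section \<open>From a kernel-preserving bijection to an automorphism\<close>

context
  fixes L :: "('v list \<Rightarrow> 'k::field) set" and \<psi> :: "'v \<Rightarrow> 'v list \<Rightarrow> 'k"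
  assumes basis: "is_basis_of L (Bdeg V lev n)"
    and \<psi>_bij: "bij_betw \<psi> Top L"
    and \<psi>_kappa: "\<And>v. v \<in> Top \<Longrightarrow> \<kappa> (tmon [v]) = \<kappa> (\<psi> v)"
begin

lemma psi_in_Bdeg: "v \<in> Top \<Longrightarrow> \<psi> v \<in> Bdeg V lev n"
  using basis \<psi>_bij by (auto simp: is_basis_of_def bij_betw_def)

lemma inj_on_psi: "inj_on \<psi> Top"
  using \<psi>_bij by (simp add: bij_betw_def)

lemma lin_indep_psi: "lin_indep (\<psi> ` Top)"
  using basis \<psi>_bij by (simp add: is_basis_of_def bij_betw_def)

lemma psi_coords_unique:
  "(\<lambda>w. \<Sum>r\<in>Top. a r * \<psi> r w) = (\<lambda>w. \<Sum>r\<in>Top. b r * \<psi> r w) \<Longrightarrow> r \<in> Top \<Longrightarrow> a r = b r"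
  by (rule lin_indep_image_coeffs_unique[OF lin_indep_psi inj_on_psi finite_Top])

lemma psi_coeff_kappa:
  assumes v: "v \<in> Top" and q: "\<psi> v [q] \<noteq> 0"
  shows "q \<in> Top" "\<kappa> (tmon [v] :: 'v list \<Rightarrow> 'k) \<subseteq> \<kappa> (tmon [q])"
proof -
  obtain q' where "[q] = [q']" "q' \<in> V" "lev q' = n" by (rule Bdeg_nonzero[OF psi_in_Bdeg[OF v] q])
  then show "q \<in> Top" by (simp add: mem_Top_iff)
  show "\<kappa> (tmon [v] :: 'v list \<Rightarrow> 'k) \<subseteq> \<kappa> (tmon [q])"
    using kappa_subset_kappa_letter[OF psi_in_Bdeg[OF v] q] \<psi>_kappa[OF v] by simp
qed

definition psi_matrix :: "'v \<Rightarrow> 'v \<Rightarrow> 'k" where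
  "psi_matrix = top_matrix (\<lambda>p q. \<psi> p [q])"

lemma admissible_psi_matrix: "admissible psi_matrix"
  unfolding psi_matrix_def by (rule top_matrix_admissible) (use psi_coeff_kappa in blast)

lemma subst_psi_matrix_top_letter: "v \<in> Top \<Longrightarrow> subst A psi_matrix (tmon [v]) = \<psi> v"
  unfolding psi_matrix_def
  by (subst subst_top_matrix_top_letter) (auto dest: psi_coeff_kappa
      intro: Bdeg_expansion[OF psi_in_Bdeg finite_V, symmetric])

lemma subst_psi_matrix_Bdeg:
  assumes "y \<in> Bdeg V lev n" shows "subst A psi_matrix y = (\<lambda>w. \<Sum>r\<in>Top. y [r] * \<psi> r w)"
proof -
  have "subst A psi_matrix y = (\<lambda>w. \<Sum>r\<in>Top. y [r] * subst A psi_matrix (tmon [r]) w)"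
    by (subst Bdeg_expansion[OF assms finite_V]) (rule subst_sum[OF finite_Top])
  then show ?thesis by (simp add: subst_psi_matrix_top_letter)
qed

lemma subst_psi_matrix_inj_Bdeg:
  assumes y: "y \<in> Bdeg V lev n" and z: "z \<in> Bdeg V lev n"
    and eq: "subst A psi_matrix y = subst A psi_matrix z"
  shows "y = z"
proof -
  have "y [r] = z [r]" if "r \<in> Top" for r
    using psi_coords_unique[OF _ that] eq by (simp add: subst_psi_matrix_Bdeg[OF y] subst_psi_matrix_Bdeg[OF z])
  then show ?thesis
    by (subst Bdeg_expansion[OF y finite_V], subst Bdeg_expansion[OF z finite_V]) simp
qed

definition psi_coords :: "'v \<Rightarrow> 'v \<Rightarrow> 'k" where
  "psi_coords u = (SOME d. tmon [u] = (\<lambda>w. \<Sum>v\<in>Top. d v * \<psi> v w))"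

lemma psi_coords: "u \<in> Top \<Longrightarrow> tmon [u] = (\<lambda>w. \<Sum>v\<in>Top. psi_coords u v * \<psi> v w)"
proof -
  assume u: "u \<in> Top"
  have "(tmon [u] :: 'v list \<Rightarrow> 'k) \<in> Bdeg V lev n" using u n_ge2 by (intro tmon_in_Bdeg) (auto simp: mem_Top_iff)
  then have "tmon [u] \<in> lin_span (\<psi> ` Top)"
    using basis \<psi>_bij by (auto simp: is_basis_of_def bij_betw_def)
  then obtain d where "tmon [u] = (\<lambda>w. \<Sum>v\<in>Top. d v * \<psi> v w)"
    by (rule lin_span_image_obtain_coeffs[OF _ inj_on_psi finite_Top])
  then have "\<exists>d. tmon [u] = (\<lambda>w. \<Sum>v\<in>Top. d v * \<psi> v w)" by blast
  then show ?thesis unfolding psi_coords_def by (rule someI_ex)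
qed

text \<open>Inverting \<psi> keeps the kernel condition: ordering the top vertices by inclusion of their
  kernels, \<psi> is triangular, because \<psi> v only involves letters q with \<kappa>_v \<subseteq> \<kappa>_q; so the
  \<psi> v with \<kappa>_u \<subseteq> \<kappa>_v span the same space as the corresponding letters, and u lies in it.\<close>
lemma psi_in_span_kappa_above:
  assumes v: "v \<in> Top" and uv: "\<kappa> (tmon [u] :: 'v list \<Rightarrow> 'k) \<subseteq> \<kappa> (tmon [v])"
  shows "\<psi> v \<in> lin_span ((\<lambda>q. tmon [q]) ` {q \<in> Top. \<kappa> (tmon [u] :: 'v list \<Rightarrow> 'k) \<subseteq> \<kappa> (tmon [q])})"
proof -
  let ?S = "{q \<in> Top. \<kappa> (tmon [u] :: 'v list \<Rightarrow> 'k) \<subseteq> \<kappa> (tmon [q])}"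
  have "\<psi> v = (\<lambda>w. \<Sum>q\<in>?S. \<psi> v [q] * tmon [q] w)"
  proof
    fix w
    have "\<psi> v [q] = 0" if "q \<in> Top - ?S" for q
      using that psi_coeff_kappa(2)[OF v, of q] uv by blast
    then have "(\<Sum>q\<in>?S. \<psi> v [q] * tmon [q] w) = (\<Sum>q\<in>Top. \<psi> v [q] * tmon [q] w)"
      by (intro sum.mono_neutral_left[OF finite_Top]) auto
    then show "\<psi> v w = (\<Sum>q\<in>?S. \<psi> v [q] * tmon [q] w)"
      by (metis Bdeg_expansion[OF psi_in_Bdeg[OF v] finite_V])
  qed
  moreover have "(\<lambda>w. \<Sum>q\<in>?S. \<psi> v [q] * tmon [q] w) \<in> lin_span ((\<lambda>q. tmon [q]) ` ?S)"
    by (rule sum_in_lin_span_image) (auto simp: finite_Top inj_on_def tmon_def fun_eq_iff)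
  ultimately show ?thesis by simp
qed

lemma tmon_in_span_psi_kappa_above:
  assumes u: "u \<in> Top"
  shows "tmon [u] \<in> lin_span (\<psi> ` {q \<in> Top. \<kappa> (tmon [u] :: 'v list \<Rightarrow> 'k) \<subseteq> \<kappa> (tmon [q])})"
proof -
  let ?S = "{q \<in> Top. \<kappa> (tmon [u] :: 'v list \<Rightarrow> 'k) \<subseteq> \<kappa> (tmon [q])}"
  have fin: "finite ?S" using finite_Top by simp
  have inj_tmon: "inj_on (\<lambda>q. tmon [q] :: 'v list \<Rightarrow> 'k) ?S"
    by (auto simp: inj_on_def tmon_def fun_eq_iff)
  have inj_psi: "inj_on \<psi> ?S" by (rule inj_on_subset[OF inj_on_psi]) blast
  have "(\<lambda>q. tmon [q]) ` ?S \<subseteq> lin_span (\<psi> ` ?S)"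
  proof (rule lin_span_if_indep_card_eq)
    show "lin_indep (\<psi> ` ?S)" by (rule lin_indep_subset[OF lin_indep_psi image_mono]) blast
    show "\<psi> ` ?S \<subseteq> lin_span ((\<lambda>q. tmon [q]) ` ?S)"
      unfolding image_subset_iff by (intro ballI psi_in_span_kappa_above) simp_all
    show "card (\<psi> ` ?S) = card ((\<lambda>q. tmon [q] :: 'v list \<Rightarrow> 'k) ` ?S)"
      by (simp only: card_image[OF inj_psi] card_image[OF inj_tmon])
  qed (use fin in simp)
  then show ?thesis using u by blast
qed

lemma psi_coords_kappa:
  assumes u: "u \<in> Top" and q: "q \<in> Top" and nonzero: "psi_coords u q \<noteq> 0"
  shows "\<kappa> (tmon [u] :: 'v list \<Rightarrow> 'k) \<subseteq> \<kappa> (tmon [q])"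
proof -
  let ?S = "{q \<in> Top. \<kappa> (tmon [u] :: 'v list \<Rightarrow> 'k) \<subseteq> \<kappa> (tmon [q])}"
  obtain d where d: "tmon [u] = (\<lambda>w. \<Sum>v\<in>?S. d v * \<psi> v w)"
    by (rule lin_span_image_obtain_coeffs[OF tmon_in_span_psi_kappa_above[OF u]])
      (use inj_on_subset[OF inj_on_psi] finite_Top in auto)
  define d' where "d' v = (if v \<in> ?S then d v else 0)" for v
  have "(\<Sum>v\<in>Top. d' v * \<psi> v w) = (\<Sum>v\<in>?S. d v * \<psi> v w)" for w
    by (rule sum.mono_neutral_cong_right[OF finite_Top]) (auto simp: d'_def)
  then have "(\<lambda>w. \<Sum>v\<in>Top. psi_coords u v * \<psi> v w) = (\<lambda>w. \<Sum>v\<in>Top. d' v * \<psi> v w)"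
    using psi_coords[OF u] d by simp
  then have "psi_coords u q = d' q" by (rule psi_coords_unique[OF _ q])
  then show ?thesis using nonzero by (auto simp: d'_def split: if_splits)
qed

definition inv_matrix :: "'v \<Rightarrow> 'v \<Rightarrow> 'k" where
  "inv_matrix = top_matrix (\<lambda>p q. if q \<in> Top then psi_coords p q else 0)"

lemma admissible_inv_matrix: "admissible inv_matrix"
  unfolding inv_matrix_def
proof (rule top_matrix_admissible)
  fix p q assume p: "p \<in> Top" and "(if q \<in> Top then psi_coords p q else 0) \<noteq> 0"
  then have q: "q \<in> Top" and "psi_coords p q \<noteq> 0" by (simp_all split: if_splits)
  then show "q \<in> Top \<and> \<kappa> (tmon [p] :: 'v list \<Rightarrow> 'k) \<subseteq> \<kappa> (tmon [q])"
    using psi_coords_kappa[OF p] by blast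
qed

lemma subst_inv_matrix_top_letter:
  "u \<in> Top \<Longrightarrow> subst A inv_matrix (tmon [u]) = (\<lambda>w. \<Sum>q\<in>Top. psi_coords u q * tmon [q] w)"
  unfolding inv_matrix_def
  by (subst subst_top_matrix_top_letter) (auto split: if_splits intro!: sum.cong)

lemma subst_psi_inv_matrix: "x \<in> tensor_alg A \<Longrightarrow> subst A psi_matrix (subst A inv_matrix x) = x"
proof (rule subst_comp_identity[OF finite_A])
  fix v assume v: "v \<in> A"
  show "subst A psi_matrix (subst A inv_matrix (tmon [v])) = tmon [v]"
  proof (cases "v \<in> Top")
    case True
    have "subst A psi_matrix (subst A inv_matrix (tmon [v])) =
        (\<lambda>w. \<Sum>q\<in>Top. psi_coords v q * subst A psi_matrix (tmon [q]) w)"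
      unfolding subst_inv_matrix_top_letter[OF True] by (rule subst_sum[OF finite_Top])
    then show ?thesis using psi_coords[OF True] by (simp add: subst_psi_matrix_top_letter)
  next
    case False
    then show ?thesis using v by (simp add: psi_matrix_def inv_matrix_def subst_top_matrix_lower_letter)
  qed
qed

lemma subst_inv_psi_matrix: "x \<in> tensor_alg A \<Longrightarrow> subst A inv_matrix (subst A psi_matrix x) = x"
proof (rule subst_comp_identity[OF finite_A])
  fix v assume v: "v \<in> A"
  show "subst A inv_matrix (subst A psi_matrix (tmon [v])) = tmon [v]"
  proof (cases "v \<in> Top")
    case True
    have vB: "(tmon [v] :: 'v list \<Rightarrow> 'k) \<in> Bdeg V lev n"
      using True n_ge2 by (intro tmon_in_Bdeg) (auto simp: mem_Top_iff)
    have "subst A inv_matrix (\<psi> v) \<in> Bdeg V lev n"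
      by (rule subst_admissible_Bdeg[OF admissible_inv_matrix order_refl psi_in_Bdeg[OF True]])
    moreover have "subst A psi_matrix (subst A inv_matrix (\<psi> v)) = subst A psi_matrix (tmon [v])"
      using subst_psi_inv_matrix[OF Bdeg_in_tensor_alg_A[OF order_refl psi_in_Bdeg[OF True]]]
      by (simp add: subst_psi_matrix_top_letter[OF True])
    ultimately have "subst A inv_matrix (\<psi> v) = tmon [v]" by (rule subst_psi_matrix_inj_Bdeg[OF _ vB])
    then show ?thesis by (simp add: subst_psi_matrix_top_letter[OF True])
  next
    case False
    then show ?thesis using v by (simp add: psi_matrix_def inv_matrix_def subst_top_matrix_lower_letter)
  qed
qed

lemma upper_vertex_like_if_kappa_bij: "upper_vertex_like V lev E n L"
  unfolding upper_vertex_like_def Let_def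
proof (intro exI[of _ "subst A psi_matrix"] conjI ballI impI)
  note cong_refl = ideal_cong_refl[OF RBn_ideal]
  show "graded_alg_aut A lev Rn (subst A psi_matrix)"
    by (rule subst_graded_alg_aut[OF admissible_psi_matrix admissible_inv_matrix
          subst_inv_psi_matrix subst_psi_inv_matrix])
  fix v assume "v \<in> V" "1 \<le> lev v \<and> lev v \<le> n - 1"
  then have "v \<in> A" "v \<notin> Top" using n_ge2 by (auto simp: mem_A_iff mem_Top_iff)
  then show "tsub (subst A psi_matrix (tmon [v])) (tmon [v]) \<in> Rn"
    using cong_refl by (simp add: psi_matrix_def subst_top_matrix_lower_letter)
next
  fix v assume "v \<in> Top"
  then show "\<exists>l\<in>L. tsub (subst A psi_matrix (tmon [v])) l \<in> Rn"
    using \<psi>_bij ideal_cong_refl[OF RBn_ideal]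
    by (intro bexI[of _ "\<psi> v"]) (auto simp: subst_psi_matrix_top_letter bij_betw_def)
next
  fix l assume "l \<in> L"
  then obtain v where "v \<in> Top" "l = \<psi> v" using \<psi>_bij by (auto simp: bij_betw_def)
  then show "\<exists>v\<in>Top. tsub (subst A psi_matrix (tmon [v])) l \<in> Rn"
    using ideal_cong_refl[OF RBn_ideal] by (auto simp: subst_psi_matrix_top_letter)
qed

end

section \<open>From an automorphism to a kernel-preserving bijection\<close>

context
  fixes L :: "('v list \<Rightarrow> 'k::field) set" and \<phi> :: "('v list \<Rightarrow> 'k) \<Rightarrow> 'v list \<Rightarrow> 'k"
  assumes basis: "is_basis_of L (Bdeg V lev n)"
    and aut: "graded_alg_aut A lev Rn \<phi>"
    and fixes_lower: "\<forall>v\<in>V. 1 \<le> lev v \<and> lev v \<le> n - 1 \<longrightarrow> tsub (\<phi> (tmon [v])) (tmon [v]) \<in> Rn"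
    and top_to_L: "\<forall>v\<in>Top. \<exists>l\<in>L. tsub (\<phi> (tmon [v])) l \<in> Rn"
    and L_to_top: "\<forall>l\<in>L. \<exists>v\<in>Top. tsub (\<phi> (tmon [v])) l \<in> Rn"
begin

lemma aut_fixes_Bdeg_lower:
  assumes b: "b \<in> Bdeg V lev (n - 1)" shows "tsub (\<phi> b) b \<in> Rn"
proof -
  have "tsub (\<phi> (\<lambda>w. \<Sum>q\<in>lay V lev (n - 1). b [q] * tmon [q] w))
      (\<lambda>w. \<Sum>q\<in>lay V lev (n - 1). b [q] * tmon [q] w) \<in> Rn"
    using n_ge2 finite_V
    by (intro aut_fixes_combination[OF RBn_ideal aut] fixes_lower[rule_format])
      (auto simp: lay_def mem_A_iff)
  then show ?thesis using Bdeg_expansion[OF b finite_V] by simp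
qed

definition letter_image :: "'v \<Rightarrow> 'v list \<Rightarrow> 'k" where
  "letter_image v = (SOME l. l \<in> L \<and> tsub (\<phi> (tmon [v])) l \<in> Rn)"

lemma letter_image:
  assumes "v \<in> Top" shows "letter_image v \<in> L \<and> tsub (\<phi> (tmon [v])) (letter_image v) \<in> Rn"
proof -
  have "\<exists>l. l \<in> L \<and> tsub (\<phi> (tmon [v])) l \<in> Rn" using top_to_L assms by blast
  then show ?thesis unfolding letter_image_def by (rule someI_ex)
qed

lemma letter_image_in_Bdeg: "v \<in> Top \<Longrightarrow> letter_image v \<in> Bdeg V lev n"
  using letter_image basis by (auto simp: is_basis_of_def)

lemma tmon_top_in_tensor_alg: "v \<in> Top \<Longrightarrow> (tmon [v] :: 'v list \<Rightarrow> 'k) \<in> tensor_alg A"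
  by (simp add: tmon_in_tensor_alg Top_subset_A)

lemma tmon_top_in_Bdeg: "v \<in> Top \<Longrightarrow> (tmon [v] :: 'v list \<Rightarrow> 'k) \<in> Bdeg V lev n"
  using n_ge2 by (intro tmon_in_Bdeg) (auto simp: mem_Top_iff)

lemma inj_on_letter_image: "inj_on letter_image Top"
proof (rule inj_onI)
  fix v v' assume v: "v \<in> Top" and v': "v' \<in> Top" and eq: "letter_image v = letter_image v'"
  have "tsub (\<phi> (tmon [v])) (\<phi> (tmon [v'])) \<in> Rn"
    using letter_image[OF v] letter_image[OF v'] eq
      ideal_cong_trans[OF RBn_ideal] ideal_cong_sym[OF RBn_ideal] by metis
  then have "tsub (tmon [v]) (tmon [v'] :: 'v list \<Rightarrow> 'k) \<in> Rn"
    using aut_cong_iff[OF RBn_ideal aut tmon_top_in_tensor_alg[OF v] tmon_top_in_tensor_alg[OF v']]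
    by simp
  then have "(tmon [v] :: 'v list \<Rightarrow> 'k) = tmon [v']"
    by (rule Bdeg_eq_if_cong[OF tmon_top_in_Bdeg[OF v] tmon_top_in_Bdeg[OF v']])
  then show "v = v'" by (metis list.inject tmon_def zero_neq_one)
qed

lemma letter_image_image: "letter_image ` Top = L"
proof
  show "letter_image ` Top \<subseteq> L" using letter_image by blast
  show "L \<subseteq> letter_image ` Top"
  proof
    fix l assume l: "l \<in> L"
    then obtain v where v: "v \<in> Top" "tsub (\<phi> (tmon [v])) l \<in> Rn" using L_to_top by blast
    then have "tsub l (letter_image v) \<in> Rn"
      using letter_image[OF v(1)] ideal_cong_trans[OF RBn_ideal] ideal_cong_sym[OF RBn_ideal] by blast
    then have "l = letter_image v"
      using Bdeg_eq_if_cong letter_image_in_Bdeg[OF v(1)] l basis by (auto simp: is_basis_of_def)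
    then show "l \<in> letter_image ` Top" using v by blast
  qed
qed

lemma kappa_letter_image: "v \<in> Top \<Longrightarrow> \<kappa> (tmon [v]) = \<kappa> (letter_image v)"
proof -
  assume v: "v \<in> Top"
  have vT: "(tmon [v] :: 'v list \<Rightarrow> 'k) \<in> tensor_alg A" by (rule tmon_top_in_tensor_alg[OF v])
  have lT: "letter_image v \<in> tensor_alg A"
    by (rule Bdeg_in_tensor_alg_A[OF order_refl letter_image_in_Bdeg[OF v]])
  have "tmul (tmon [v]) b \<in> Rn \<longleftrightarrow> tmul (letter_image v) b \<in> Rn"
    if b: "b \<in> Bdeg V lev (n - 1)" for b
  proof -
    have bT: "b \<in> tensor_alg A" by (rule Bdeg_in_tensor_alg_A[OF _ b]) simp
    have "tsub (tmul (\<phi> (tmon [v])) (\<phi> b)) (tmul (letter_image v) b) \<in> Rn"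
      by (rule ideal_cong_tmul[OF RBn_ideal lT aut_in_tensor_alg[OF RBn_ideal aut bT]
            conjunct2[OF letter_image[OF v]]
            aut_fixes_Bdeg_lower[OF b]])
    then have cong: "tsub (\<phi> (tmul (tmon [v]) b)) (tmul (letter_image v) b) \<in> Rn"
      by (rule ideal_cong_trans[OF RBn_ideal aut_tmul[OF RBn_ideal aut vT bT]])
    have "tmul (tmon [v]) b \<in> Rn \<longleftrightarrow> \<phi> (tmul (tmon [v]) b) \<in> Rn"
      using aut_mem_ideal_iff[OF RBn_ideal aut tmul_in_tensor_alg[OF vT bT]] by simp
    also have "\<dots> \<longleftrightarrow> tmul (letter_image v) b \<in> Rn"
      by (rule ideal_cong_mem_iff[OF RBn_ideal cong])
    finally show ?thesis .
  qed
  then show ?thesis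
    using kappa_eq_RBn[OF tmon_top_in_Bdeg[OF v]] kappa_eq_RBn[OF letter_image_in_Bdeg[OF v]]
    by auto
qed

end

lemma kappa_bij_if_upper_vertex_like:
  fixes L :: "('v list \<Rightarrow> 'k::field) set"
  assumes basis: "is_basis_of L (Bdeg V lev n)" and "upper_vertex_like V lev E n L"
  shows "\<exists>\<psi>. bij_betw \<psi> Top L \<and> (\<forall>v\<in>Top. \<kappa> (tmon [v]) = \<kappa> (\<psi> v))"
proof -
  obtain \<phi> where aut: "graded_alg_aut A lev Rn \<phi>"
    and fixes_lower: "\<forall>v\<in>V. 1 \<le> lev v \<and> lev v \<le> n - 1 \<longrightarrow> tsub (\<phi> (tmon [v])) (tmon [v]) \<in> Rn"
    and top_to_L: "\<forall>v\<in>Top. \<exists>l\<in>L. tsub (\<phi> (tmon [v])) l \<in> Rn"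
    and L_to_top: "\<forall>l\<in>L. \<exists>v\<in>Top. tsub (\<phi> (tmon [v])) l \<in> Rn"
    using assms(2) unfolding upper_vertex_like_def Let_def by blast
  note facts = basis aut fixes_lower top_to_L L_to_top
  have "bij_betw (letter_image L \<phi>) Top L"
    unfolding bij_betw_def using inj_on_letter_image[OF facts] letter_image_image[OF facts] by blast
  moreover have "\<forall>v\<in>Top. \<kappa> (tmon [v]) = \<kappa> (letter_image L \<phi> v)"
    using kappa_letter_image[OF facts] by blast
  ultimately show ?thesis by blast
qed

end

theorem mainTheorem12:
  fixes V :: "'v set" and lev :: "'v \<Rightarrow> nat" and E :: "('v \<times> 'v) set"
    and n :: nat and L :: "('v list \<Rightarrow> 'k::field) set"
  assumes "layered_graph V lev E"
    and "uniform V lev E"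
    and "card (lay V lev 0) = 1"
    and "2 \<le> n"
    and "is_basis_of L (Bdeg V lev n)"
  shows "upper_vertex_like V lev E n L \<longleftrightarrow>
         (\<exists>\<psi>. bij_betw \<psi> (lay V lev n) L \<and>
               (\<forall>v \<in> lay V lev n. kappa V lev E n (tmon [v]) = kappa V lev E n (\<psi> v)))"
proof -
  interpret layered_restriction V lev E n using assms(1,4) by unfold_locales
  show ?thesis
  proof
    assume "upper_vertex_like V lev E n L"
    then show "\<exists>\<psi>. bij_betw \<psi> Top L \<and> (\<forall>v\<in>Top. \<kappa> (tmon [v]) = \<kappa> (\<psi> v))"
      by (rule kappa_bij_if_upper_vertex_like[OF assms(5)])
  next
    assume "\<exists>\<psi>. bij_betw \<psi> Top L \<and> (\<forall>v\<in>Top. \<kappa> (tmon [v]) = \<kappa> (\<psi> v))"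
    then obtain \<psi> where "bij_betw \<psi> Top L" "\<forall>v\<in>Top. \<kappa> (tmon [v]) = \<kappa> (\<psi> v)" by blast
    then show "upper_vertex_like V lev E n L"
      by (intro upper_vertex_like_if_kappa_bij[OF assms(5)]) simp_all
  qed
qed

end
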